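(* For any fixed positive integer $R$, for each $n$ there exists a sequence of reals $S=(\alpha_0,\ldots,\alpha_{M-1})$ such that every permutation $\sigma$ of $\{1,\ldots,n\}$ differs by at most $R$ transpositions from the order type of some consecutive $n$-word $(\alpha_i,\ldots,\alpha_{i+n-1})$ (indices mod $M$) of $S$, and $$\frac{n!}{n^{2R}}\prec M\prec\frac{n!\log n}{n^{2R}}.$$
   Context: Two sequences $(a_1,\ldots,a_k),(b_1,\ldots,b_k)\in\mathbb{R}^k$ have the same order type if $a_i<a_j$ iff $b_i<b_j$ for all $1\le i,j\le k$; the order type of a sequence of distinct reals is identified with the corresponding permutation of $\{1,\ldots,n\}$. The distance between permutations is the minimum number of transpositions needed to transform one into the other. $f\prec g$ means there is $c>0$ with $f(n)\le c\,g(n)$ for all sufficiently large $n$. *)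

theory Defs
  imports "HOL-Analysis.Analysis" "HOL-Combinatorics.Combinatorics"
begin

text \<open>Permutations of {1..n} are represented (0-indexed) as permutations of {0..<n}.\<close>

definition perm_dist :: "nat \<Rightarrow> (nat \<Rightarrow> nat) \<Rightarrow> (nat \<Rightarrow> nat) \<Rightarrow> nat" where
  "perm_dist n \<sigma> \<tau> = (LEAST k. \<exists>ts. length ts = k \<and>
      (\<forall>(a,b)\<in>set ts. a < n \<and> b < n \<and> a \<noteq> b) \<and>
      \<sigma> = foldr (\<lambda>(a,b) f. Transposition.transpose a b \<circ> f) ts \<tau>)"

text \<open>Order type of (w 0, ..., w (n-1)) (assumed distinct): position j goes to its rank.\<close>
definition order_type :: "nat \<Rightarrow> (nat \<Rightarrow> real) \<Rightarrow> (nat \<Rightarrow> nat)" where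
  "order_type n w = (\<lambda>j. if j < n then card {k. k < n \<and> w k < w j} else j)"

definition cyc_word :: "nat \<Rightarrow> (nat \<Rightarrow> real) \<Rightarrow> nat \<Rightarrow> nat \<Rightarrow> real" where
  "cyc_word M S i = (\<lambda>j. S ((i + j) mod M))"

definition R_covers :: "nat \<Rightarrow> nat \<Rightarrow> nat \<Rightarrow> (nat \<Rightarrow> real) \<Rightarrow> bool" where
  "R_covers R n M S \<longleftrightarrow> (\<forall>\<sigma>. \<sigma> permutes {0..<n} \<longrightarrow>
     (\<exists>i<M. inj_on (cyc_word M S i) {0..<n} \<and>
            perm_dist n \<sigma> (order_type n (cyc_word M S i)) \<le> R))"

end

(*
  Let B be the ball of radius R around a permutation sigma; it has at least (n div 2R)^2R and at
  most (R+1) n^2R elements. Each of the n windows of a uniformly random list of 2n-1 distinct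
  values has a uniformly random pattern, which lies in B with probability p = |B| / n!. Two
  windows at distance k both lie in B with probability at most p w(k), where w(k) = O(k/n) for
  k <= 2R+1 and w(k) = O(n^2R (4/n)^k) otherwise, and for large n the w(k) sum to at most 1/2.
  By Bonferroni some window lies in B with probability at least q = n p / 2.
  Hence lists chosen greedily each cover a fraction q of the permutations not yet covered; after
  about (2R+1) ln n / q rounds at most n! / n^(2R+1) permutations remain, and these are appended
  verbatim. The sequence has length about (2n-1) (2R+1) ln n / q + n! / n^2R, which lies between
  n! / n^2R and C n! ln n / n^2R.
*)

theory Submission
  imports Defs
begin

section \<open>Order patterns of lists\<close>

definition pattern :: "'a::linorder list \<Rightarrow> nat \<Rightarrow> nat" where
  "pattern xs = (\<lambda>p. if p < length xs then card {q. q < length xs \<and> xs!q < xs!p} else p)"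

lemma pattern_less_iff:
  assumes "distinct xs" "a < length xs" "b < length xs"
  shows "pattern xs a < pattern xs b \<longleftrightarrow> xs!a < xs!b"
proof
  assume "xs!a < xs!b"
  then have "{q. q < length xs \<and> xs!q < xs!a} \<subset> {q. q < length xs \<and> xs!q < xs!b}"
    using assms by auto
  then show "pattern xs a < pattern xs b" using assms by (simp add: pattern_def psubset_card_mono)
next
  assume "pattern xs a < pattern xs b"
  moreover have "pattern xs b \<le> pattern xs a" if "\<not> xs!a < xs!b"
  proof -
    have "{q. q < length xs \<and> xs!q < xs!b} \<subseteq> {q. q < length xs \<and> xs!q < xs!a}"
      using that by auto
    then show ?thesis using assms by (simp add: pattern_def card_mono)
  qed
  ultimately show "xs!a < xs!b" by linarith
qed

lemma pattern_less_length:
  assumes "p < length xs" shows "pattern xs p < length xs"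
proof -
  have "{q. q < length xs \<and> xs!q < xs!p} \<subseteq> {0..<length xs} - {p}" by auto
  then have "card {q. q < length xs \<and> xs!q < xs!p} \<le> card ({0..<length xs} - {p})"
    by (intro card_mono) auto
  then show ?thesis using assms by (simp add: pattern_def)
qed

lemma pattern_inj_on:
  assumes "distinct xs" shows "inj_on (pattern xs) {0..<length xs}"
proof (rule inj_onI)
  fix a b assume ab: "a \<in> {0..<length xs}" "b \<in> {0..<length xs}" "pattern xs a = pattern xs b"
  show "a = b"
  proof (rule ccontr)
    assume "a \<noteq> b"
    then have "xs!a \<noteq> xs!b" using assms ab by (simp add: nth_eq_iff_index_eq)
    then have "xs!a < xs!b \<or> xs!b < xs!a" by auto
    then show False using pattern_less_iff[OF assms, of a b] pattern_less_iff[OF assms, of b a] ab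
      by auto
  qed
qed

lemma pattern_permutes:
  assumes "distinct xs" shows "pattern xs permutes {0..<length xs}"
proof (rule bij_imp_permutes)
  have "pattern xs ` {0..<length xs} \<subseteq> {0..<length xs}" using pattern_less_length by auto
  then show "bij_betw (pattern xs) {0..<length xs} {0..<length xs}"
    using pattern_inj_on[OF assms] by (simp add: bij_betw_def endo_inj_surj)
qed (simp add: pattern_def)

lemma pattern_map_mono:
  assumes "\<And>x y. x \<in> set xs \<Longrightarrow> y \<in> set xs \<Longrightarrow> f x < f y \<longleftrightarrow> x < y"
  shows "pattern (map f xs) = pattern xs"
proof
  fix p
  show "pattern (map f xs) p = pattern xs p"
  proof (cases "p < length xs")
    case True
    then have "{q. q < length xs \<and> map f xs!q < map f xs!p} = {q. q < length xs \<and> xs!q < xs!p}"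
      using assms by auto
    then show ?thesis using True by (simp add: pattern_def)
  qed (simp add: pattern_def)
qed

lemma pattern_eq_card_less:
  assumes "distinct xs" "p < length xs"
  shows "pattern xs p = card {y \<in> set xs. y < xs!p}"
proof -
  have "(\<lambda>q. xs!q) ` {q. q < length xs \<and> xs!q < xs!p} = {y \<in> set xs. y < xs!p}"
    by (auto simp: in_set_conv_nth)
  moreover have "inj_on (\<lambda>q. xs!q) {q. q < length xs \<and> xs!q < xs!p}"
    using assms by (intro inj_on_nth) auto
  ultimately show ?thesis using assms by (simp add: pattern_def card_image[symmetric])
qed

lemma card_less_strict_mono:
  fixes S :: "'a::linorder set"
  assumes "finite S" "a \<in> S" "a < b"
  shows "card {y \<in> S. y < a} < card {y \<in> S. y < b}"
proof (rule psubset_card_mono)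
  show "{y \<in> S. y < a} \<subset> {y \<in> S. y < b}" using assms by auto
qed (use assms in simp)

lemma card_less_inj:
  fixes S :: "'a::linorder set"
  assumes "finite S" "a \<in> S" "b \<in> S" "card {y \<in> S. y < a} = card {y \<in> S. y < b}"
  shows "a = b"
  using card_less_strict_mono[OF assms(1,2), of b] card_less_strict_mono[OF assms(1,3), of a] assms(4)
  by (cases a b rule: linorder_cases) auto

lemma pattern_inject:
  fixes xs ys :: "'a::linorder list"
  assumes "distinct xs" "distinct ys" "set xs = set ys" "pattern xs = pattern ys"
  shows "xs = ys"
proof (rule nth_equalityI)
  show l: "length xs = length ys" using assms by (metis distinct_card)
  fix p assume p: "p < length xs"
  have "card {y \<in> set xs. y < xs!p} = card {y \<in> set xs. y < ys!p}"
    using pattern_eq_card_less[OF assms(1) p] pattern_eq_card_less[OF assms(2), of p] p l assms(3,4)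
    by simp
  then show "xs!p = ys!p" using card_less_inj[of "set xs" "xs!p" "ys!p"] p l assms(3)
    by (metis List.finite_set nth_mem)
qed

abbreviation perm_lists :: "nat \<Rightarrow> nat list set" where
  "perm_lists N \<equiv> permutations_of_set {0..<N}"

lemma perm_lists_iff: "xs \<in> perm_lists N \<longleftrightarrow> distinct xs \<and> set xs = {0..<N}"
  by (auto simp: permutations_of_set_def)

lemma length_perm_lists: "xs \<in> perm_lists N \<Longrightarrow> length xs = N"
  by (simp add: length_finite_permutations_of_set)

lemma pattern_perm_lists_nth:
  assumes "xs \<in> perm_lists N" "p < N" shows "pattern xs p = xs!p"
proof -
  have "xs!p < N" using assms nth_mem[of p xs] by (auto simp: perm_lists_iff length_perm_lists)
  then have "{y \<in> set xs. y < xs!p} = {0..<xs!p}" using assms(1) by (auto simp: perm_lists_iff)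
  then show ?thesis using assms pattern_eq_card_less[of xs p]
    by (simp add: perm_lists_iff length_perm_lists)
qed

lemma pattern_perm_lists:
  assumes "xs \<in> perm_lists N" shows "pattern xs = (\<lambda>p. if p < N then xs!p else p)"
proof
  fix p show "pattern xs p = (if p < N then xs!p else p)"
    by (cases "p < N")
      (simp add: pattern_perm_lists_nth[OF assms], simp add: pattern_def length_perm_lists[OF assms])
qed

definition perms :: "nat \<Rightarrow> (nat \<Rightarrow> nat) set" where
  "perms n = {\<tau>. \<tau> permutes {0..<n}}"

lemma card_perms: "card (perms n) = fact n"
  unfolding perms_def by (rule card_permutations) auto

lemma finite_perms: "finite (perms n)"
  unfolding perms_def by (simp add: finite_permutations)

lemma map_permutes_perm_lists:
  assumes "\<tau> permutes {0..<n}" shows "map \<tau> [0..<n] \<in> perm_lists n"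
  using permutes_inj_on[OF assms] permutes_image[OF assms]
  by (auto simp: perm_lists_iff distinct_map)

lemma pattern_map_permutes:
  assumes "\<tau> permutes {0..<n}" shows "pattern (map \<tau> [0..<n]) = \<tau>"
  using pattern_perm_lists[OF map_permutes_perm_lists[OF assms]] assms
  by (auto simp: permutes_def intro!: ext)

lemma map_pattern_perm_lists:
  "xs \<in> perm_lists N \<Longrightarrow> map (pattern xs) [0..<N] = xs"
  by (auto simp: pattern_perm_lists length_perm_lists intro!: nth_equalityI)

lemma strict_sorted_nth_less_iff:
  fixes s :: "'a::linorder list"
  assumes "sorted_wrt (<) s" "x < length s" "y < length s"
  shows "s!x < s!y \<longleftrightarrow> x < y"
  using assms sorted_wrt_nth_less[OF assms(1)] by (metis less_asym linorder_neqE_nat)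

definition arrange :: "'a::linorder set \<Rightarrow> (nat \<Rightarrow> nat) \<Rightarrow> 'a list" where
  "arrange A \<tau> = map (\<lambda>i. sorted_list_of_set A ! i) (map \<tau> [0..<card A])"

lemma length_arrange [simp]: "length (arrange A \<tau>) = card A"
  by (simp add: arrange_def)

lemma arrange_props:
  fixes A :: "'a::linorder set"
  assumes "finite A" "\<tau> permutes {0..<card A}"
  shows "distinct (arrange A \<tau>)" "set (arrange A \<tau>) = A" "pattern (arrange A \<tau>) = \<tau>"
proof -
  let ?s = "sorted_list_of_set A" and ?t = "map \<tau> [0..<card A]"
  have ls: "length ?s = card A" by simp
  have t: "distinct ?t" "set ?t = {0..<card A}"
    using map_permutes_perm_lists[OF assms(2)] by (auto simp: perm_lists_iff)
  have "inj_on (\<lambda>i. ?s ! i) {0..<card A}" by (intro inj_on_nth) (auto simp: ls)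
  then show "distinct (arrange A \<tau>)" unfolding arrange_def distinct_map using t permutes_inj_on[OF assms(2)] by auto
  have "(\<lambda>i. ?s ! i) ` {0..<card A} = set ?s" by (auto simp: in_set_conv_nth ls)
  moreover have "set (arrange A \<tau>) = (\<lambda>i. ?s ! i) ` (\<tau> ` {0..<card A})"
    by (simp add: arrange_def image_image)
  ultimately show "set (arrange A \<tau>) = A" using t(2) assms(1) by simp
  have "\<And>x y. x \<in> set ?t \<Longrightarrow> y \<in> set ?t \<Longrightarrow> ?s ! x < ?s ! y \<longleftrightarrow> x < y"
    using strict_sorted_nth_less_iff[OF strict_sorted_list_of_set] ls t(2) by simp
  then show "pattern (arrange A \<tau>) = \<tau>"
    using pattern_map_mono pattern_map_permutes[OF assms(2)] by (metis arrange_def)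
qed

lemma arrange_pattern:
  fixes xs :: "'a::linorder list"
  assumes "distinct xs" shows "arrange (set xs) (pattern xs) = xs"
proof -
  have "pattern xs permutes {0..<card (set xs)}"
    using pattern_permutes[OF assms] assms by (simp add: distinct_card)
  then show ?thesis using arrange_props[of "set xs" "pattern xs"] assms by (intro pattern_inject) auto
qed

section \<open>Patterns of windows\<close>

definition window_fiber :: "nat \<Rightarrow> nat \<Rightarrow> nat \<Rightarrow> (nat \<Rightarrow> nat) \<Rightarrow> nat list set" where
  "window_fiber L j l \<tau> = {xs \<in> perm_lists L. pattern (take l (drop j xs)) = \<tau>}"

definition rearrange_window :: "nat \<Rightarrow> nat \<Rightarrow> (nat \<Rightarrow> nat) \<Rightarrow> nat list \<Rightarrow> nat list" where
  "rearrange_window j l \<tau> xs = take j xs @ arrange (set (take l (drop j xs))) \<tau> @ drop (j+l) xs"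

lemma take_drop_split: "take j xs @ take l (drop j xs) @ drop (j+l) xs = xs"
  by (metis add.commute append_take_drop_id drop_drop)

lemma rearrange_window:
  assumes "j + l \<le> L" "xs \<in> perm_lists L" "\<tau> permutes {0..<l}"
  shows "rearrange_window j l \<tau> xs \<in> window_fiber L j l \<tau>"
    and "take l (drop j (rearrange_window j l \<tau> xs)) = arrange (set (take l (drop j xs))) \<tau>"
    and "take j (rearrange_window j l \<tau> xs) = take j xs"
    and "drop (j+l) (rearrange_window j l \<tau> xs) = drop (j+l) xs"
proof -
  let ?w = "take l (drop j xs)" and ?ys = "rearrange_window j l \<tau> xs"
  have len: "length xs = L" using assms length_perm_lists by auto
  have dx: "distinct xs" and sx: "set xs = {0..<L}" using assms by (auto simp: perm_lists_iff)
  have cw: "card (set ?w) = l" using dx len assms by (simp add: distinct_card)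
  have A: "distinct (arrange (set ?w) \<tau>)" "set (arrange (set ?w) \<tau>) = set ?w"
     "pattern (arrange (set ?w) \<tau>) = \<tau>" "length (arrange (set ?w) \<tau>) = l"
    using arrange_props[of "set ?w" \<tau>] assms(3) cw by auto
  have lt: "length (take j xs) = j" using len assms by simp
  show w: "take l (drop j ?ys) = arrange (set ?w) \<tau>"
    and "take j ?ys = take j xs" and "drop (j+l) ?ys = drop (j+l) xs"
    unfolding rearrange_window_def using lt A(4) by simp_all
  have "distinct (take j xs @ ?w @ drop (j+l) xs)" using dx take_drop_split[of j xs l] by simp
  then have "distinct ?ys" unfolding rearrange_window_def using A(1,2) by auto
  moreover have "set ?ys = set xs"
    unfolding rearrange_window_def using A(2) by (metis set_append take_drop_split)
  ultimately show "?ys \<in> window_fiber L j l \<tau>"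
    unfolding window_fiber_def using sx w A(3) by (simp add: perm_lists_iff)
qed

lemma rearrange_window_inverse:
  assumes "j + l \<le> L" "xs \<in> window_fiber L j l \<tau>" "\<tau>' permutes {0..<l}"
  shows "rearrange_window j l \<tau> (rearrange_window j l \<tau>' xs) = xs"
proof -
  let ?w = "take l (drop j xs)" and ?ys = "rearrange_window j l \<tau>' xs"
  have xs: "xs \<in> perm_lists L" and pt: "pattern ?w = \<tau>"
    using assms by (auto simp: window_fiber_def)
  have dw: "distinct ?w" using xs by (simp add: perm_lists_iff distinct_drop distinct_take)
  have "card (set ?w) = l" using dw length_perm_lists[OF xs] assms(1) by (simp add: distinct_card)
  then have "set (take l (drop j ?ys)) = set ?w"
    using rearrange_window(2)[OF assms(1) xs assms(3)] arrange_props(2)[of "set ?w" \<tau>'] assms(3)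
    by simp
  then have "arrange (set (take l (drop j ?ys))) \<tau> = ?w"
    using arrange_pattern[OF dw] pt by simp
  then show ?thesis unfolding rearrange_window_def[of j l \<tau>]
    using rearrange_window(3,4)[OF assms(1) xs assms(3)] take_drop_split[of j xs l] by simp
qed

lemma card_window_fiber_le:
  assumes "j + l \<le> L" "\<tau> permutes {0..<l}" "\<tau>' permutes {0..<l}"
  shows "card (window_fiber L j l \<tau>) \<le> card (window_fiber L j l \<tau>')"
proof (rule card_inj_on_le)
  show "inj_on (rearrange_window j l \<tau>') (window_fiber L j l \<tau>)"
    by (rule inj_on_inverseI[where g = "rearrange_window j l \<tau>"])
      (use rearrange_window_inverse assms in blast)
  show "rearrange_window j l \<tau>' ` window_fiber L j l \<tau> \<subseteq> window_fiber L j l \<tau>'"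
    using rearrange_window(1)[OF assms(1) _ assms(3)] by (auto simp: window_fiber_def)
qed (simp add: window_fiber_def)

lemma pattern_window_perms:
  assumes "j + l \<le> L" "xs \<in> perm_lists L" shows "pattern (take l (drop j xs)) \<in> perms l"
proof -
  have "distinct (take l (drop j xs))"
    using assms by (simp add: perm_lists_iff distinct_drop distinct_take)
  moreover have "length (take l (drop j xs)) = l" using assms length_perm_lists by auto
  ultimately show ?thesis using pattern_permutes unfolding perms_def by fastforce
qed

text \<open>All window patterns are equally frequent, since rearranging the window is a bijection
  between fibers.\<close>

lemma card_window_fiber:
  assumes "j + l \<le> L" "\<tau> \<in> perms l"
  shows "fact l * card (window_fiber L j l \<tau>) = fact L"
proof -
  have eq: "card (window_fiber L j l \<sigma>) = card (window_fiber L j l \<tau>)" if "\<sigma> \<in> perms l" for \<sigma>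
    using card_window_fiber_le[OF assms(1), of \<sigma> \<tau>] card_window_fiber_le[OF assms(1), of \<tau> \<sigma>]
      assms(2) that
    unfolding perms_def by simp
  have U: "perm_lists L = (\<Union>\<sigma>\<in>perms l. window_fiber L j l \<sigma>)"
    using pattern_window_perms[OF assms(1)] by (auto simp: window_fiber_def)
  have "card (perm_lists L) = (\<Sum>\<sigma>\<in>perms l. card (window_fiber L j l \<sigma>))"
    unfolding U by (rule card_UN_disjoint) (auto simp: finite_perms window_fiber_def)
  also have "\<dots> = fact l * card (window_fiber L j l \<tau>)" using eq card_perms by simp
  finally show ?thesis by simp
qed

lemma card_window_pattern_in:
  assumes "j + l \<le> L" "T \<subseteq> perms l"
  shows "fact l * card {xs \<in> perm_lists L. pattern (take l (drop j xs)) \<in> T} = fact L * card T"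
proof -
  have U: "{xs \<in> perm_lists L. pattern (take l (drop j xs)) \<in> T} = (\<Union>\<tau>\<in>T. window_fiber L j l \<tau>)"
    by (auto simp: window_fiber_def)
  have "finite T" using assms(2) finite_perms by (rule finite_subset)
  then have "card {xs \<in> perm_lists L. pattern (take l (drop j xs)) \<in> T}
      = (\<Sum>\<tau>\<in>T. card (window_fiber L j l \<tau>))"
    unfolding U by (intro card_UN_disjoint) (auto simp: window_fiber_def)
  then have "fact l * card {xs \<in> perm_lists L. pattern (take l (drop j xs)) \<in> T}
      = (\<Sum>\<tau>\<in>T. fact l * card (window_fiber L j l \<tau>))"
    by (simp add: sum_distrib_left)
  also have "\<dots> = fact L * card T"
    using card_window_fiber[OF assms(1)] assms(2) by (simp add: subset_iff)
  finally show ?thesis .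
qed

definition order_invariant :: "(nat list \<Rightarrow> bool) \<Rightarrow> bool" where
  "order_invariant C \<longleftrightarrow> (\<forall>zs f. distinct zs \<longrightarrow>
      (\<forall>x\<in>set zs. \<forall>y\<in>set zs. f x < f y \<longleftrightarrow> x < y) \<longrightarrow> C (map f zs) = C zs)"

lemma order_invariant_pattern:
  assumes "order_invariant C" "distinct w"
  shows "C w \<longleftrightarrow> C (map (pattern w) [0..<length w])"
proof -
  let ?s = "sorted_list_of_set (set w)" and ?t = "map (pattern w) [0..<length w]"
  have cw: "card (set w) = length w" using assms(2) by (simp add: distinct_card)
  have w: "w = map (\<lambda>i. ?s ! i) ?t" using arrange_pattern[OF assms(2)] by (simp add: arrange_def cw)
  have t: "distinct ?t" "set ?t = {0..<length w}"
    using map_permutes_perm_lists[OF pattern_permutes[OF assms(2)]] by (auto simp: perm_lists_iff)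
  have "\<forall>x\<in>set ?t. \<forall>y\<in>set ?t. ?s ! x < ?s ! y \<longleftrightarrow> x < y"
    unfolding t(2) using strict_sorted_nth_less_iff[OF strict_sorted_list_of_set[where A = "set w"]] cw
    by simp
  then have "C (map (\<lambda>i. ?s ! i) ?t) = C ?t" using assms(1) t(1) unfolding order_invariant_def by blast
  then show ?thesis using w by simp
qed

lemma card_window_satisfying:
  assumes "j + N \<le> L" "order_invariant C"
  shows "fact N * card {xs \<in> perm_lists L. C (take N (drop j xs))} = fact L * card {zs \<in> perm_lists N. C zs}"
proof -
  let ?T = "{\<tau> \<in> perms N. C (map \<tau> [0..<N])}"
  have "C (take N (drop j xs)) \<longleftrightarrow> pattern (take N (drop j xs)) \<in> ?T" if "xs \<in> perm_lists L" for xs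
    using order_invariant_pattern[OF assms(2), of "take N (drop j xs)"] that assms(1)
      pattern_window_perms[OF assms(1) that]
    by (simp add: perm_lists_iff distinct_drop distinct_take length_perm_lists)
  then have "{xs \<in> perm_lists L. C (take N (drop j xs))}
      = {xs \<in> perm_lists L. pattern (take N (drop j xs)) \<in> ?T}" by blast
  moreover have "bij_betw (\<lambda>\<tau>. map \<tau> [0..<N]) ?T {zs \<in> perm_lists N. C zs}"
  proof (rule bij_betw_byWitness[where f' = pattern])
    show "(\<lambda>\<tau>. map \<tau> [0..<N]) ` ?T \<subseteq> {zs \<in> perm_lists N. C zs}"
      using map_permutes_perm_lists by (auto simp: perms_def)
    show "pattern ` {zs \<in> perm_lists N. C zs} \<subseteq> ?T"
      using map_pattern_perm_lists pattern_permutes length_perm_lists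
      by (fastforce simp: perms_def perm_lists_iff)
  qed (auto simp: pattern_map_permutes map_pattern_perm_lists perms_def)
  then have "card ?T = card {zs \<in> perm_lists N. C zs}" by (rule bij_betw_same_card)
  ultimately show ?thesis using card_window_pattern_in[OF assms(1), of ?T] by simp
qed

section \<open>Balls for the transposition distance\<close>

definition valid_transps :: "nat \<Rightarrow> (nat \<times> nat) list \<Rightarrow> bool" where
  "valid_transps n ts \<longleftrightarrow> (\<forall>(a,b)\<in>set ts. a < n \<and> b < n \<and> a \<noteq> b)"

definition apply_transps :: "(nat \<times> nat) list \<Rightarrow> (nat \<Rightarrow> nat) \<Rightarrow> (nat \<Rightarrow> nat)" where
  "apply_transps ts f = foldr (\<lambda>(a,b) f. Transposition.transpose a b \<circ> f) ts f"

definition transp_ball :: "nat \<Rightarrow> nat \<Rightarrow> (nat \<Rightarrow> nat) \<Rightarrow> (nat \<Rightarrow> nat) set" where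
  "transp_ball n R \<sigma> = {\<tau>. \<exists>ts. length ts \<le> R \<and> valid_transps n ts \<and> \<sigma> = apply_transps ts \<tau>}"

lemma apply_transps_Nil [simp]: "apply_transps [] f = f"
  by (simp add: apply_transps_def)

lemma apply_transps_Cons [simp]:
  "apply_transps ((a,b)#ts) f = Transposition.transpose a b \<circ> apply_transps ts f"
  by (simp add: apply_transps_def)

lemma apply_transps_append: "apply_transps (xs @ ys) f = apply_transps xs (apply_transps ys f)"
  by (simp add: apply_transps_def)

lemma apply_transps_comp: "apply_transps ts f = apply_transps ts id \<circ> f"
  by (induction ts) (auto simp: comp_assoc)

lemma apply_transps_rev: "apply_transps ts (apply_transps (rev ts) f) = f"
proof (induction ts arbitrary: f)
  case (Cons t ts)
  obtain a b where t: "t = (a,b)" by fastforce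
  have "apply_transps (t#ts) (apply_transps (rev (t#ts)) f)
      = Transposition.transpose a b \<circ> (Transposition.transpose a b \<circ> f)"
    using Cons.IH t by (simp add: apply_transps_append)
  then show ?case by (simp add: comp_assoc[symmetric])
qed simp

lemma apply_rev_transps: "apply_transps (rev ts) (apply_transps ts f) = f"
  using apply_transps_rev[of "rev ts"] by simp

lemma perm_dist_le_if_transp_ball:
  assumes "\<tau> \<in> transp_ball n R \<sigma>" shows "perm_dist n \<sigma> \<tau> \<le> R"
proof -
  obtain ts where ts: "length ts \<le> R" "valid_transps n ts" "\<sigma> = apply_transps ts \<tau>"
    using assms by (auto simp: transp_ball_def)
  have "perm_dist n \<sigma> \<tau> \<le> length ts"
    unfolding perm_dist_def
    by (rule Least_le) (use ts in \<open>auto simp: valid_transps_def apply_transps_def\<close>)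
  then show ?thesis using ts by simp
qed

lemma center_in_transp_ball: "\<sigma> \<in> transp_ball n R \<sigma>"
  by (auto simp: transp_ball_def valid_transps_def intro!: exI[of _ "[]"])

definition transps_support :: "(nat \<times> nat) list \<Rightarrow> nat set" where
  "transps_support ts = fst ` set ts \<union> snd ` set ts"

lemma card_transps_support: "card (transps_support ts) \<le> 2 * length ts"
proof -
  have "card (transps_support ts) \<le> card (fst ` set ts) + card (snd ` set ts)"
    unfolding transps_support_def by (rule card_Un_le)
  also have "\<dots> \<le> card (set ts) + card (set ts)"
    by (intro add_mono card_image_le) auto
  also have "\<dots> \<le> 2 * length ts" using card_length[of ts] by simp
  finally show ?thesis .
qed

lemma apply_transps_fixes: "x \<notin> transps_support ts \<Longrightarrow> apply_transps ts id x = x"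
  by (induction ts) (auto simp: transps_support_def)

lemma apply_disjoint_transps:
  assumes "distinct (map fst ts @ map snd ts)" "(a,b) \<in> set ts"
  shows "apply_transps ts id a = b"
  using assms
proof (induction ts)
  case (Cons t ts)
  obtain a0 b0 where t: "t = (a0,b0)" by fastforce
  show ?case
  proof (cases "(a,b) = t")
    case True
    have "a0 \<notin> transps_support ts" using Cons.prems(1) t
      by (auto simp: transps_support_def image_iff)
    then show ?thesis using True t apply_transps_fixes[of a0 ts] by (simp add: id_def)
  next
    case False
    then have ab: "(a,b) \<in> set ts" using Cons.prems(2) by simp
    have "distinct (map fst ts @ map snd ts)" using Cons.prems(1) by auto
    then have "apply_transps ts id a = b" using ab by (rule Cons.IH)
    moreover have "b \<in> snd ` set ts" using ab by force
    then have "b \<noteq> a0" "b \<noteq> b0" using Cons.prems(1) t by auto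
    ultimately show ?thesis using t by (simp add: id_def)
  qed
qed simp

lemma card_disagree_transp_ball:
  assumes "\<tau> \<in> transp_ball n R \<sigma>" "inj_on \<tau> {0..<n}"
  shows "card {p \<in> {0..<n}. \<tau> p \<noteq> \<sigma> p} \<le> 2 * R"
proof -
  obtain ts where ts: "length ts \<le> R" "\<sigma> = apply_transps ts \<tau>"
    using assms by (auto simp: transp_ball_def)
  have "card {p \<in> {0..<n}. \<tau> p \<noteq> \<sigma> p} \<le> card (transps_support ts)"
  proof (rule card_inj_on_le[where f = \<tau>])
    show "inj_on \<tau> {p \<in> {0..<n}. \<tau> p \<noteq> \<sigma> p}" using assms(2) by (rule inj_on_subset) auto
    show "\<tau> ` {p \<in> {0..<n}. \<tau> p \<noteq> \<sigma> p} \<subseteq> transps_support ts"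
      using ts(2) apply_transps_comp[of ts \<tau>] apply_transps_fixes by fastforce
  qed (simp add: transps_support_def)
  also have "\<dots> \<le> 2 * R" using card_transps_support[of ts] ts(1) by simp
  finally show ?thesis .
qed

lemma card_disagree_transp_ball2:
  assumes "\<tau>1 \<in> transp_ball n R \<sigma>" "inj_on \<tau>1 {0..<n}" "\<tau>2 \<in> transp_ball n R \<sigma>" "inj_on \<tau>2 {0..<n}"
  shows "card {p \<in> {0..<n}. \<tau>1 p \<noteq> \<tau>2 p} \<le> 4 * R"
proof -
  have "card {p \<in> {0..<n}. \<tau>1 p \<noteq> \<tau>2 p}
      \<le> card ({p \<in> {0..<n}. \<tau>1 p \<noteq> \<sigma> p} \<union> {p \<in> {0..<n}. \<tau>2 p \<noteq> \<sigma> p})"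
    by (intro card_mono) auto
  also have "\<dots> \<le> card {p \<in> {0..<n}. \<tau>1 p \<noteq> \<sigma> p} + card {p \<in> {0..<n}. \<tau>2 p \<noteq> \<sigma> p}"
    by (rule card_Un_le)
  also have "\<dots> \<le> 4 * R"
    using card_disagree_transp_ball[OF assms(1,2)] card_disagree_transp_ball[OF assms(3,4)] by simp
  finally show ?thesis .
qed

lemma apply_transps_perms:
  assumes "\<sigma> \<in> perms n" "valid_transps n ts" shows "apply_transps ts \<sigma> \<in> perms n"
  using assms(2)
proof (induction ts)
  case (Cons t ts)
  obtain a b where t: "t = (a,b)" by fastforce
  have "valid_transps n ts" and ab: "a < n" "b < n" using Cons.prems t by (auto simp: valid_transps_def)
  then have "apply_transps ts \<sigma> permutes {0..<n}" using Cons by (simp add: perms_def)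
  moreover have "Transposition.transpose a b permutes {0..<n}"
    using ab by (intro permutes_swap_id) auto
  ultimately have "Transposition.transpose a b \<circ> apply_transps ts \<sigma> permutes {0..<n}"
    by (rule permutes_compose)
  then show ?case using t by (simp add: perms_def o_def)
qed (use assms in simp)

lemma transp_ball_subset_image:
  "transp_ball n R \<sigma> \<subseteq> (\<lambda>ts. apply_transps (rev ts) \<sigma>) ` {ts. set ts \<subseteq> {0..<n} \<times> {0..<n} \<and> length ts \<le> R}"
proof
  fix \<tau> assume "\<tau> \<in> transp_ball n R \<sigma>"
  then obtain ts where ts: "length ts \<le> R" "valid_transps n ts" "\<sigma> = apply_transps ts \<tau>"
    by (auto simp: transp_ball_def)
  then have "\<tau> = apply_transps (rev ts) \<sigma>" "set ts \<subseteq> {0..<n} \<times> {0..<n}"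
    using apply_rev_transps by (auto simp: valid_transps_def)
  then show "\<tau> \<in> (\<lambda>ts. apply_transps (rev ts) \<sigma>) ` {ts. set ts \<subseteq> {0..<n} \<times> {0..<n} \<and> length ts \<le> R}"
    using ts(1) by blast
qed

lemma finite_transp_ball: "finite (transp_ball n R \<sigma>)"
  by (rule finite_subset[OF transp_ball_subset_image]) (simp add: finite_lists_length_le)

lemma card_transp_ball_le:
  assumes "n \<ge> 1" shows "card (transp_ball n R \<sigma>) \<le> (R+1) * n^(2*R)"
proof -
  let ?T = "{ts. set ts \<subseteq> {0..<n} \<times> {0..<n} \<and> length ts \<le> R}"
  have "card (transp_ball n R \<sigma>) \<le> card ((\<lambda>ts. apply_transps (rev ts) \<sigma>) ` ?T)"
    by (intro card_mono finite_imageI transp_ball_subset_image finite_lists_length_le) simp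
  also have "\<dots> \<le> card ?T"
    by (rule card_image_le) (intro finite_lists_length_le, simp)
  also have "\<dots> = (\<Sum>i\<le>R. (n*n)^i)"
    by (simp add: card_lists_length_le card_cartesian_product)
  also have "\<dots> \<le> (\<Sum>i\<le>R. (n*n)^R)"
    by (intro sum_mono power_increasing) (use assms in auto)
  also have "\<dots> = (R+1) * n^(2*R)" by (simp add: power_mult power2_eq_square)
  finally show ?thesis .
qed

text \<open>For the lower bound, pick one point below \<open>n\<close> in each residue class modulo \<open>2R\<close>
  (\<open>(n div 2R)^2R\<close> choices). Pairing the points of classes \<open>2i\<close> and \<open>2i+1\<close> gives \<open>R\<close> disjoint
  transpositions, and their product determines the choice.\<close>

locale transp_ball_lower =
  fixes n R :: nat
  assumes R_pos: "R \<ge> 1"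
begin

definition d where "d = 2 * R"
definition choices where "choices = PiE {..<d} (\<lambda>c. (\<lambda>a. d * a + c) ` {..<n div d})"
definition pairing where "pairing f = map (\<lambda>i. (f (2*i), f (2*i+1))) [0..<R]"

lemma choice_mod:
  assumes "f \<in> choices" "c < d" shows "f c mod d = c" "f c < n"
proof -
  obtain a where a: "a < n div d" "f c = d * a + c" using assms by (auto simp: choices_def)
  then show "f c mod d = c" using assms(2) by simp
  have "d * a + c < d * (a + 1)" using assms(2) by simp
  also have "\<dots> \<le> d * (n div d)" using a(1) by (intro mult_le_mono2) simp
  also have "\<dots> \<le> n" by simp
  finally show "f c < n" using a by simp
qed

lemma choice_inj:
  assumes "f \<in> choices" "c < d" "c' < d" "f c = f c'" shows "c = c'"
  using choice_mod(1)[OF assms(1,2)] choice_mod(1)[OF assms(1,3)] assms(4) by metis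

lemma card_choices: "card choices = (n div d) ^ d"
proof -
  have "card ((\<lambda>a. d * a + c) ` {..<n div d}) = n div d" for c
    using R_pos by (subst card_image) (auto simp: inj_on_def d_def)
  then show ?thesis by (simp add: choices_def card_PiE)
qed

lemma pairing_disjoint:
  assumes "f \<in> choices" shows "distinct (map fst (pairing f) @ map snd (pairing f))"
proof -
  have "i = j" if "i < R" "j < R" "f (2*i) = f (2*j) \<or> f (2*i+1) = f (2*j+1)" for i j
    using choice_inj[OF assms, of "2*i" "2*j"] choice_inj[OF assms, of "2*i+1" "2*j+1"] that
    by (auto simp: d_def)
  then have "inj_on (\<lambda>i. f (2*i)) {0..<R}" "inj_on (\<lambda>i. f (2*i+1)) {0..<R}"
    by (auto simp: inj_on_def)
  moreover have "f (2*i) \<noteq> f (2*j+1)" if "i < R" "j < R" for i j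
    using choice_inj[OF assms, of "2*i" "2*j+1"] that by (auto simp: d_def) presburger
  ultimately show ?thesis by (auto simp: pairing_def distinct_map o_def)
qed

lemma valid_pairing: assumes "f \<in> choices" shows "valid_transps n (pairing f)"
proof -
  have "f (2*i) < n \<and> f (2*i+1) < n \<and> f (2*i) \<noteq> f (2*i+1)" if "i < R" for i
  proof -
    have "2*i < d" "2*i+1 < d" using that by (auto simp: d_def)
    then show ?thesis using choice_mod(2)[OF assms] choice_inj[OF assms, of "2*i" "2*i+1"] by auto
  qed
  then show ?thesis by (auto simp: valid_transps_def pairing_def)
qed

lemma pairing_support: "transps_support (pairing f) \<subseteq> f ` {..<d}"
  by (auto simp: transps_support_def pairing_def d_def)

lemma apply_pairing_inj:
  assumes "f \<in> choices" "f' \<in> choices"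
    and eq: "apply_transps (pairing f) id = apply_transps (pairing f') id"
  shows "f = f'"
proof -
  let ?g = "\<lambda>f. apply_transps (pairing f) id"
  have swaps: "?g f (f (2*k)) = f (2*k+1)" if "f \<in> choices" "k < R" for f k
    by (rule apply_disjoint_transps[OF pairing_disjoint[OF that(1)]])
      (use that(2) in \<open>auto simp: pairing_def\<close>)
  have even: "f (2*k) = f' (2*k)" if k: "k < R" for k
  proof (rule ccontr)
    assume ne: "f (2*k) \<noteq> f' (2*k)"
    have "f (2*k) \<notin> f' ` {..<d}"
      using ne choice_mod(1)[OF assms(1), of "2*k"] choice_mod(1)[OF assms(2)] k
      by (auto simp: d_def)
    then have "?g f' (f (2*k)) = f (2*k)" using pairing_support apply_transps_fixes by blast
    moreover have "f (2*k+1) \<noteq> f (2*k)" using choice_inj[OF assms(1), of "2*k+1" "2*k"] k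
      by (auto simp: d_def)
    ultimately show False using swaps[OF assms(1) k] eq by simp
  qed
  have odd: "f (2*k+1) = f' (2*k+1)" if k: "k < R" for k
    using swaps[OF assms(1) k] swaps[OF assms(2) k] even[OF k] eq by simp
  show ?thesis
  proof (rule PiE_ext)
    fix c assume "c \<in> {..<d}"
    then show "f c = f' c"
      using even[of "c div 2"] odd[of "c div 2"] by (cases "even c") (auto simp: d_def elim: oddE)
  qed (use assms in \<open>auto simp: choices_def\<close>)
qed

lemma card_transp_ball_ge:
  assumes "\<sigma> \<in> perms n" shows "(n div d) ^ d \<le> card (transp_ball n R \<sigma> \<inter> perms n)"
proof -
  let ?e = "\<lambda>f. apply_transps (pairing f) \<sigma>"
  have "inj_on ?e choices"
  proof (rule inj_onI)
    fix f f' assume f: "f \<in> choices" "f' \<in> choices" "?e f = ?e f'"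
    have "surj \<sigma>" using assms by (simp add: perms_def permutes_surj)
    then have "apply_transps (pairing f) id = apply_transps (pairing f') id"
      using f(3) apply_transps_comp[of _ \<sigma>] by (metis surj_fun_eq)
    then show "f = f'" using apply_pairing_inj f(1,2) by blast
  qed
  moreover have "?e ` choices \<subseteq> transp_ball n R \<sigma> \<inter> perms n"
  proof
    fix t assume "t \<in> ?e ` choices"
    then obtain f where f: "f \<in> choices" "t = ?e f" by auto
    have "length (rev (pairing f)) \<le> R" "valid_transps n (rev (pairing f))"
      using valid_pairing[OF f(1)] by (simp_all add: pairing_def valid_transps_def)
    moreover have "\<sigma> = apply_transps (rev (pairing f)) t" using f(2) apply_rev_transps by simp
    ultimately have "t \<in> transp_ball n R \<sigma>" unfolding transp_ball_def by blast
    moreover have "t \<in> perms n" using f apply_transps_perms[OF assms] valid_pairing by simp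
    ultimately show "t \<in> transp_ball n R \<sigma> \<inter> perms n" by simp
  qed
  ultimately have "card (?e ` choices) \<le> card (transp_ball n R \<sigma> \<inter> perms n)"
    by (intro card_mono) (simp_all add: finite_transp_ball)
  then show ?thesis using card_choices card_image[OF \<open>inj_on ?e choices\<close>] by simp
qed

end

lemma card_transp_ball_inter_perms_ge:
  assumes "R \<ge> 1" "\<sigma> \<in> perms n"
  shows "(n div (2*R)) ^ (2*R) \<le> card (transp_ball n R \<sigma> \<inter> perms n)"
proof -
  interpret transp_ball_lower n R using assms(1) by unfold_locales
  show ?thesis using card_transp_ball_ge[OF assms(2)] by (simp add: d_def)
qed

section \<open>Overlapping windows\<close>

definition shift_above :: "nat \<Rightarrow> nat \<Rightarrow> nat" where "shift_above v x = (if v \<le> x then x + 1 else x)"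
definition insert_last :: "nat \<Rightarrow> nat list \<Rightarrow> nat list" where "insert_last v ys = map (shift_above v) ys @ [v]"

lemma shift_above_less_iff: "shift_above v x < shift_above v y \<longleftrightarrow> x < y" by (auto simp: shift_above_def)
lemma shift_above_less: "shift_above v x < v \<longleftrightarrow> x < v" by (auto simp: shift_above_def)
lemma less_shift_above: "v < shift_above v x \<longleftrightarrow> v \<le> x" by (auto simp: shift_above_def)
lemma inj_shift_above: "inj (shift_above v)" by (auto simp: inj_on_def shift_above_def split: if_splits)

lemma perm_lists_of_subset:
  assumes "distinct xs" "length xs = N" "set xs \<subseteq> {0..<N}" shows "xs \<in> perm_lists N"
  using assms card_subset_eq[of "{0..<N}" "set xs"] by (simp add: perm_lists_iff distinct_card)

lemma perm_lists_Suc_insert_last: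
  assumes "zs \<in> perm_lists (Suc M)"
  obtains ys v where "ys \<in> perm_lists M" "v \<le> M" "zs = insert_last v ys"
proof -
  have d: "distinct zs" and s: "set zs = {0..<Suc M}" using assms by (auto simp: perm_lists_iff)
  have "zs \<noteq> []" using assms length_perm_lists by fastforce
  define v where "v = last zs"
  define ys where "ys = map (\<lambda>x. if v < x then x - 1 else x) (butlast zs)"
  have zs: "zs = butlast zs @ [v]" using \<open>zs \<noteq> []\<close> by (simp add: v_def)
  then have "distinct (butlast zs @ [v])" using d by simp
  moreover have "v \<in> set zs" using \<open>zs \<noteq> []\<close> by (simp add: v_def)
  ultimately have v: "v \<notin> set (butlast zs)" "v \<le> M" using s by auto
  have "map (shift_above v) ys = butlast zs"
    unfolding ys_def using v(1) by (auto simp: shift_above_def intro!: map_idI)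
  then have "zs = insert_last v ys" using zs by (simp add: insert_last_def)
  moreover have "ys \<in> perm_lists M"
  proof (rule perm_lists_of_subset)
    show "distinct ys"
      using d \<open>map (shift_above v) ys = butlast zs\<close> by (metis distinct_butlast distinct_map)
    show "length ys = M" using assms by (simp add: ys_def length_perm_lists)
    have "x < Suc M" "x \<noteq> v" if "x \<in> set (butlast zs)" for x
      using that s v(1) by (auto dest: in_set_butlastD)
    then show "set ys \<subseteq> {0..<M}" using v(2) by (fastforce simp: ys_def)
  qed
  ultimately show ?thesis using v(2) that by blast
qed

lemma pattern_take_insert_last:
  assumes "n \<le> length ys" shows "pattern (take n (insert_last v ys)) = pattern (take n ys)"
proof -
  have "take n (insert_last v ys) = map (shift_above v) (take n ys)"
    using assms by (simp add: insert_last_def take_map)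
  then show ?thesis using shift_above_less_iff by (simp add: pattern_map_mono)
qed

lemma drop_insert_last:
  assumes "k \<le> length ys" shows "drop k (insert_last v ys) = map (shift_above v) (drop k ys) @ [v]"
  using assms by (simp add: insert_last_def drop_map)

lemma card_le_if_diameter_less:
  fixes S :: "nat set"
  assumes "finite S" "\<And>a b. a \<in> S \<Longrightarrow> b \<in> S \<Longrightarrow> a \<le> b \<Longrightarrow> b - a < m"
  shows "card S \<le> m"
proof (cases "S = {}")
  case False
  then have "S \<subseteq> {Min S..<Min S + m}"
    using assms Min_le[OF assms(1)] Min_in[OF assms(1)] by fastforce
  then show ?thesis using card_mono[of "{Min S..<Min S + m}" S] by simp
qed simp

text \<open>Appending a value \<open>v\<close> (and shifting the larger entries) to a list \<open>ys\<close> of length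
  \<open>n + k - 1\<close>: the pattern of the last \<open>n\<close> entries of the result depends on \<open>v\<close> only through
  the rank of \<open>v\<close> among the last \<open>n - 1\<close> entries of \<open>ys\<close>.\<close>

locale append_to_tail =
  fixes n k R :: nat and \<sigma> :: "nat \<Rightarrow> nat" and ys :: "nat list"
  assumes n_pos: "n \<ge> 1" and R_pos: "R \<ge> 1" and ys: "ys \<in> perm_lists (n+k-1)"
begin

definition tail where "tail = drop k ys"
definition new_tail where "new_tail v = map (shift_above v) tail @ [v]"
definition rank where "rank v = card {q. q < n - 1 \<and> tail!q < v}"

lemma length_tail: "length tail = n - 1" using ys by (simp add: tail_def length_perm_lists)

lemma distinct_tail: "distinct tail" using ys by (simp add: tail_def perm_lists_iff distinct_drop)

lemma length_new_tail: "length (new_tail v) = n" using length_tail n_pos by (simp add: new_tail_def)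

lemma distinct_new_tail: "distinct (new_tail v)"
proof -
  have "distinct (map (shift_above v) tail)"
    using distinct_tail inj_shift_above by (simp add: distinct_map inj_on_def)
  moreover have "v \<notin> set (map (shift_above v) tail)" by (auto simp: shift_above_def)
  ultimately show ?thesis by (simp add: new_tail_def)
qed

lemma new_tail_nth: "p < n - 1 \<Longrightarrow> new_tail v ! p = shift_above v (tail!p)" "new_tail v ! (n-1) = v"
  using length_tail by (auto simp: new_tail_def nth_append)

lemma pattern_new_tail_inj: "inj_on (pattern (new_tail v)) {0..<n}"
  using pattern_inj_on[OF distinct_new_tail] length_new_tail by simp

lemma le_iff_rank_le:
  assumes "p < n - 1" shows "v \<le> tail!p \<longleftrightarrow> rank v \<le> pattern tail p"
proof
  assume "v \<le> tail!p"
  then have "{q. q < n - 1 \<and> tail!q < v} \<subseteq> {q. q < n - 1 \<and> tail!q < tail!p}" by auto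
  then show "rank v \<le> pattern tail p" using assms length_tail by (simp add: rank_def pattern_def card_mono)
next
  assume "rank v \<le> pattern tail p"
  moreover have "pattern tail p < rank v" if "tail!p < v"
  proof -
    have "{q. q < n - 1 \<and> tail!q < tail!p} \<subset> {q. q < n - 1 \<and> tail!q < v}" using assms that by auto
    then show ?thesis using assms length_tail by (simp add: rank_def pattern_def psubset_card_mono)
  qed
  ultimately show "v \<le> tail!p" by linarith
qed

lemma pattern_new_tail_lower:
  assumes p: "p < n - 1"
  shows "pattern (new_tail v) p = pattern tail p + (if rank v \<le> pattern tail p then 1 else 0)"
proof -
  have "q \<in> {q. q < n \<and> new_tail v!q < new_tail v!p}
      \<longleftrightarrow> q \<in> {q. q < n - 1 \<and> tail!q < tail!p} \<union> (if v \<le> tail!p then {n-1} else {})" for q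
  proof (cases "q < n - 1")
    case True
    then have "q < n" by simp
    then show ?thesis using True p new_tail_nth(1)[of q v] new_tail_nth(1)[of p v]
      by (simp add: shift_above_less_iff)
  next
    case False
    then show ?thesis
      using p new_tail_nth(1)[of p v] new_tail_nth(2)[of v] n_pos less_shift_above[of v]
      by (cases "q = n - 1") auto
  qed
  then have eq: "{q. q < n \<and> new_tail v!q < new_tail v!p}
      = {q. q < n - 1 \<and> tail!q < tail!p} \<union> (if v \<le> tail!p then {n-1} else {})" by blast
  have "p < n" using p by simp
  then have "pattern (new_tail v) p = card {q. q < n \<and> new_tail v!q < new_tail v!p}"
    using length_new_tail by (simp add: pattern_def)
  also have "\<dots> = card {q. q < n - 1 \<and> tail!q < tail!p} + (if v \<le> tail!p then 1 else 0)"
    unfolding eq by (simp add: card_Un_disjoint)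
  also have "card {q. q < n - 1 \<and> tail!q < tail!p} = pattern tail p"
    using p length_tail by (simp add: pattern_def)
  finally show ?thesis using le_iff_rank_le[OF p] by simp
qed

lemma pattern_new_tail_last: "pattern (new_tail v) (n - 1) = rank v"
proof -
  have "q \<in> {q. q < n \<and> new_tail v!q < new_tail v!(n-1)} \<longleftrightarrow> q \<in> {q. q < n - 1 \<and> tail!q < v}" for q
  proof (cases "q < n - 1")
    case True
    then have "q < n" by simp
    then show ?thesis using True new_tail_nth(1)[of q v] new_tail_nth(2)[of v] by (simp add: shift_above_less)
  next
    case False
    then show ?thesis using new_tail_nth(2)[of v] n_pos by (cases "q = n - 1") auto
  qed
  then have "{q. q < n \<and> new_tail v!q < new_tail v!(n-1)} = {q. q < n - 1 \<and> tail!q < v}" by blast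
  then show ?thesis using length_new_tail n_pos by (simp add: pattern_def rank_def)
qed

lemma rank_le: "rank v \<le> n - 1"
proof -
  have "rank v \<le> card {0..<n-1}" unfolding rank_def by (intro card_mono) auto
  then show ?thesis by simp
qed

text \<open>Between two values of different rank, the patterns differ at the last position and at every
  position whose rank lies in between.\<close>

lemma rank_diff_less:
  assumes "pattern (new_tail v1) \<in> transp_ball n R \<sigma>" "pattern (new_tail v2) \<in> transp_ball n R \<sigma>"
    and "rank v1 < rank v2"
  shows "rank v2 - rank v1 < 4 * R"
proof -
  let ?P = "{p. p < n - 1 \<and> rank v1 \<le> pattern tail p \<and> pattern tail p < rank v2}"
  have tail_perm: "pattern tail permutes {0..<n-1}" using pattern_permutes[OF distinct_tail] length_tail by simp
  have "insert (n-1) ?P \<subseteq> {p \<in> {0..<n}. pattern (new_tail v1) p \<noteq> pattern (new_tail v2) p}"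
  proof
    fix p assume "p \<in> insert (n-1) ?P"
    then show "p \<in> {p \<in> {0..<n}. pattern (new_tail v1) p \<noteq> pattern (new_tail v2) p}"
    proof
      assume "p \<in> ?P"
      then show ?thesis using pattern_new_tail_lower[of p v1] pattern_new_tail_lower[of p v2] by auto
    qed (use pattern_new_tail_last assms(3) n_pos in auto)
  qed
  then have "card (insert (n-1) ?P)
      \<le> card {p \<in> {0..<n}. pattern (new_tail v1) p \<noteq> pattern (new_tail v2) p}"
    by (intro card_mono) auto
  also have "\<dots> \<le> 4 * R"
    using card_disagree_transp_ball2[OF assms(1) pattern_new_tail_inj assms(2) pattern_new_tail_inj] .
  finally have "card (insert (n-1) ?P) \<le> 4 * R" .
  moreover have "card (insert (n-1) ?P) = card ?P + 1" by simp
  ultimately have "card ?P < 4 * R" by simp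
  moreover have "pattern tail ` ?P = {rank v1..<rank v2}"
  proof
    show "{rank v1..<rank v2} \<subseteq> pattern tail ` ?P"
    proof
      fix t assume t: "t \<in> {rank v1..<rank v2}"
      then have "t \<in> pattern tail ` {0..<n-1}" using rank_le[of v2] permutes_image[OF tail_perm] by simp
      then show "t \<in> pattern tail ` ?P" using t by force
    qed
  qed auto
  moreover have "inj_on (pattern tail) ?P" using permutes_inj_on[OF tail_perm] by (rule inj_on_subset) auto
  ultimately show ?thesis using card_image[of "pattern tail" ?P] by simp
qed

text \<open>Values of equal rank form an interval free of tail entries, hence of entries among the first
  \<open>k\<close> of \<open>ys\<close>.\<close>

lemma rank_eq_diff_le:
  assumes "v1 \<le> v2" "v2 < n + k" "rank v1 = rank v2"
  shows "v2 - v1 \<le> k"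
proof -
  have "{q. q < n - 1 \<and> tail!q < v1} \<subseteq> {q. q < n - 1 \<and> tail!q < v2}" using assms(1) by auto
  then have eq: "{q. q < n - 1 \<and> tail!q < v1} = {q. q < n - 1 \<and> tail!q < v2}"
    using card_subset_eq[of "{q. q < n - 1 \<and> tail!q < v2}"] assms(3) by (simp add: rank_def)
  have "x \<in> set (take k ys)" if x: "v1 \<le> x" "x < v2" for x
  proof -
    have "x \<notin> set tail"
    proof
      assume "x \<in> set tail"
      then obtain q where q: "q < n - 1" "tail!q = x" using length_tail by (metis in_set_conv_nth)
      then have "q \<in> {q. q < n - 1 \<and> tail!q < v2}" using x by simp
      then have "q \<in> {q. q < n - 1 \<and> tail!q < v1}" using eq by simp
      then show False using q x by simp
    qed
    moreover have "x \<in> set ys" using ys x assms(2) by (simp add: perm_lists_iff)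
    moreover have "set ys = set (take k ys) \<union> set tail"
      unfolding tail_def by (metis append_take_drop_id set_append)
    ultimately show ?thesis by blast
  qed
  then have "card {v1..<v2} \<le> card (set (take k ys))" by (intro card_mono) auto
  also have "\<dots> \<le> k" using card_length[of "take k ys"] by simp
  finally show ?thesis by simp
qed

lemma card_good_values:
  "card {v. v < n + k \<and> pattern (new_tail v) \<in> transp_ball n R \<sigma>} \<le> 4 * R * (k + 1)"
proof -
  let ?V = "{v. v < n + k \<and> pattern (new_tail v) \<in> transp_ball n R \<sigma>}"
  have "card (rank ` ?V) \<le> 4 * R"
  proof (rule card_le_if_diameter_less)
    fix a b assume "a \<in> rank ` ?V" "b \<in> rank ` ?V" "a \<le> b"
    then obtain v1 v2 where "v1 \<in> ?V" "v2 \<in> ?V" "a = rank v1" "b = rank v2" by blast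
    then show "b - a < 4 * R" using rank_diff_less[of v1 v2] R_pos \<open>a \<le> b\<close> by (cases "a = b") auto
  qed simp
  have fiber: "card {v \<in> ?V. rank v = t} \<le> k + 1" for t
  proof (rule card_le_if_diameter_less)
    fix a b assume "a \<in> {v \<in> ?V. rank v = t}" "b \<in> {v \<in> ?V. rank v = t}" "a \<le> b"
    then show "b - a < k + 1" using rank_eq_diff_le[of a b] by simp
  qed simp
  have "card ?V \<le> card (\<Union>t\<in>rank ` ?V. {v \<in> ?V. rank v = t})" by (intro card_mono) auto
  also have "\<dots> \<le> (\<Sum>t\<in>rank ` ?V. card {v \<in> ?V. rank v = t})" by (rule card_UN_le) simp
  also have "\<dots> \<le> (\<Sum>t\<in>rank ` ?V. k + 1)" by (intro sum_mono fiber)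
  also have "\<dots> = card (rank ` ?V) * (k + 1)" by simp
  also have "\<dots> \<le> 4 * R * (k + 1)" using \<open>card (rank ` ?V) \<le> 4 * R\<close> by (rule mult_le_mono1)
  finally show ?thesis .
qed

lemma pattern_drop_insert_last: "pattern (drop k (insert_last v ys)) = pattern (new_tail v)"
  using drop_insert_last[of k ys v] ys n_pos by (simp add: new_tail_def tail_def length_perm_lists)

end

text \<open>Overlapping windows at a small shift \<open>k\<close>: a list of length \<open>n + k\<close> arises from one of
  length \<open>n + k - 1\<close> by appending a value, and the first window is unaffected.\<close>

lemma overlapping_windows_subset_insert_last:
  assumes "n \<ge> 1" "k \<ge> 1"
  shows "{zs \<in> perm_lists (n+k). pattern (take n zs) = \<tau> \<and> pattern (drop k zs) \<in> B}
    \<subseteq> (\<lambda>(ys,v). insert_last v ys) ` (SIGMA ys:{ys \<in> perm_lists (n+k-1). pattern (take n ys) = \<tau>}.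
          {v. v < n + k \<and> pattern (drop k (insert_last v ys)) \<in> B})"
proof
  fix zs assume zs: "zs \<in> {zs \<in> perm_lists (n+k). pattern (take n zs) = \<tau> \<and> pattern (drop k zs) \<in> B}"
  then have "zs \<in> perm_lists (Suc (n+k-1))" using assms by simp
  then obtain ys v where yv: "ys \<in> perm_lists (n+k-1)" "v \<le> n+k-1" "zs = insert_last v ys"
    using perm_lists_Suc_insert_last by blast
  have "length ys = n + k - 1" using yv length_perm_lists by auto
  then have "pattern (take n ys) = \<tau>" using zs yv pattern_take_insert_last[of n ys v] assms by simp
  moreover have "v < n + k" using yv assms by simp
  ultimately show "zs \<in> (\<lambda>(ys,v). insert_last v ys) ` (SIGMA ys:{ys \<in> perm_lists (n+k-1). pattern (take n ys) = \<tau>}.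
          {v. v < n + k \<and> pattern (drop k (insert_last v ys)) \<in> B})"
    using zs yv by force
qed

lemma card_overlapping_windows_small:
  assumes "n \<ge> 1" "k \<ge> 1" "R \<ge> 1" "\<tau> \<in> perms n"
  shows "fact n * card {zs \<in> perm_lists (n+k). pattern (take n zs) = \<tau> \<and> pattern (drop k zs) \<in> transp_ball n R \<sigma>}
     \<le> 4 * R * (k + 1) * fact (n+k-1)"
proof -
  let ?Y = "{ys \<in> perm_lists (n+k-1). pattern (take n ys) = \<tau>}"
  let ?V = "\<lambda>ys. {v. v < n + k \<and> pattern (drop k (insert_last v ys)) \<in> transp_ball n R \<sigma>}"
  have fin: "finite (SIGMA ys:?Y. ?V ys)" by (intro finite_SigmaI) auto
  have "card {zs \<in> perm_lists (n+k). pattern (take n zs) = \<tau> \<and> pattern (drop k zs) \<in> transp_ball n R \<sigma>}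
      \<le> card ((\<lambda>(ys,v). insert_last v ys) ` (SIGMA ys:?Y. ?V ys))"
    by (rule card_mono[OF finite_imageI[OF fin] overlapping_windows_subset_insert_last[OF assms(1,2)]])
  also have "\<dots> \<le> card (SIGMA ys:?Y. ?V ys)" by (rule card_image_le[OF fin])
  also have "\<dots> = (\<Sum>ys\<in>?Y. card (?V ys))" by (rule card_SigmaI) auto
  also have "\<dots> \<le> (\<Sum>ys\<in>?Y. 4 * R * (k + 1))"
  proof (rule sum_mono)
    fix ys assume "ys \<in> ?Y"
    then interpret append_to_tail n k R \<sigma> ys using assms by unfold_locales auto
    show "card (?V ys) \<le> 4 * R * (k + 1)" using card_good_values by (simp add: pattern_drop_insert_last)
  qed
  also have "\<dots> = 4 * R * (k + 1) * card ?Y" by simp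
  finally have "fact n * card {zs \<in> perm_lists (n+k). pattern (take n zs) = \<tau> \<and> pattern (drop k zs) \<in> transp_ball n R \<sigma>}
      \<le> fact n * (4 * R * (k + 1) * card ?Y)" by (rule mult_le_mono2)
  also have "\<dots> = 4 * R * (k + 1) * (fact n * card ?Y)" by (simp only: ac_simps)
  also have "fact n * card ?Y = fact (n+k-1)"
    using card_window_fiber[of 0 n "n+k-1" \<tau>] assms by (simp add: window_fiber_def)
  finally show ?thesis .
qed

lemma pattern_window_cong:
  assumes "distinct xs" "distinct ys" "length xs = length ys" "pattern xs = pattern ys"
  shows "pattern (take l (drop j xs)) = pattern (take l (drop j ys))"
proof -
  have "take l (drop j xs) ! a < take l (drop j xs) ! b \<longleftrightarrow> take l (drop j ys) ! a < take l (drop j ys) ! b"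
    if "a < length (take l (drop j xs))" "b < length (take l (drop j xs))" for a b
  proof -
    have "j + a < length xs" "j + b < length xs" using that by auto
    then show ?thesis
      using pattern_less_iff[OF assms(1), of "j+a" "j+b"] pattern_less_iff[OF assms(2), of "j+a" "j+b"]
        that assms(3,4) by simp
  qed
  then show ?thesis using assms(3) unfolding pattern_def by (intro ext) (auto intro!: arg_cong[where f = card])
qed

text \<open>The entries at positions in \<open>[k, n)\<close> are then determined, and the set of the first \<open>k\<close>
  entries determines the list; it is a \<open>k\<close>-subset of the \<open>2k\<close> remaining values.\<close>

locale two_windows =
  fixes n k :: nat and \<tau> \<tau>' :: "nat \<Rightarrow> nat"
  assumes k_le: "k \<le> n"
begin

definition joint where
  "joint = {zs \<in> perm_lists (n+k). pattern (take n zs) = \<tau> \<and> pattern (drop k zs) = \<tau>'}"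

lemma jointD:
  assumes "zs \<in> joint"
  shows "distinct zs" "length zs = n + k" "set zs = {0..<n+k}"
    "pattern (take n zs) = \<tau>" "pattern (drop k zs) = \<tau>'"
  using assms length_perm_lists by (auto simp: joint_def perm_lists_iff)

lemma joint_middle_nth_eq:
  assumes "zs \<in> joint" "zs' \<in> joint" "k \<le> q" "q < n"
  shows "zs!q = zs'!q"
proof -
  have less_iff: "zs!q' < zs!q \<longleftrightarrow> (q' < n \<and> \<tau> q' < \<tau> q \<or> k \<le> q' \<and> \<tau>' (q' - k) < \<tau>' (q - k))"
    if "zs \<in> joint" "q' < n + k" for zs q'
  proof -
    note B = jointD[OF that(1)]
    have "distinct (take n zs)" "distinct (drop k zs)" using B(1) by auto
    then show ?thesis
      using pattern_less_iff[of "take n zs" q' q] pattern_less_iff[of "drop k zs" "q' - k" "q - k"]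
        that(2) assms(3,4) B by (cases "q' < n"; cases "k \<le> q'") auto
  qed
  have nth: "zs!q = card {q'. q' < n + k \<and> zs!q' < zs!q}" if "zs \<in> joint" for zs
    using pattern_perm_lists_nth[of zs "n+k" q] that assms(4) jointD[OF that]
    by (simp add: joint_def pattern_def)
  have "{q'. q' < n + k \<and> zs!q' < zs!q} = {q'. q' < n + k \<and> zs'!q' < zs'!q}"
    using less_iff[OF assms(1)] less_iff[OF assms(2)] by blast
  then show ?thesis using nth[OF assms(1)] nth[OF assms(2)] by simp
qed

lemma set_drop_joint:
  assumes "zs \<in> joint" shows "set (drop n zs) = {0..<n+k} - set (take n zs)"
proof -
  have "set (take n zs) \<inter> set (drop n zs) = {}"
    using set_take_disj_set_drop_if_distinct[OF jointD(1)[OF assms]] by simp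
  moreover have "set (take n zs) \<union> set (drop n zs) = {0..<n+k}"
    using jointD(3)[OF assms] by (metis append_take_drop_id set_append)
  ultimately show ?thesis by blast
qed

lemma inj_on_set_take_joint: "inj_on (\<lambda>zs. set (take k zs)) joint"
proof (rule inj_onI)
  fix zs zs' assume z: "zs \<in> joint" "zs' \<in> joint" and eqs: "set (take k zs) = set (take k zs')"
  note B = jointD[OF z(1)] and B' = jointD[OF z(2)]
  have "pattern (take k (drop 0 (take n zs))) = pattern (take k (drop 0 (take n zs')))"
    using B B' by (intro pattern_window_cong) auto
  then have "take k zs = take k zs'"
    using B(1) B'(1) eqs k_le by (intro pattern_inject) auto
  have tn: "take n zs = take n zs'"
  proof (rule nth_equalityI)
    fix q assume "q < length (take n zs)"
    then show "take n zs ! q = take n zs' ! q"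
      using \<open>take k zs = take k zs'\<close> joint_middle_nth_eq[OF z, of q] B(2)
      by (cases "q < k") (simp_all, metis nth_take)
  qed (use B(2) B'(2) in simp)
  have "pattern (take k (drop (n-k) (drop k zs))) = pattern (take k (drop (n-k) (drop k zs')))"
    using B B' by (intro pattern_window_cong) auto
  then have "pattern (drop n zs) = pattern (drop n zs')" using B(2) B'(2) k_le by simp
  then have "drop n zs = drop n zs'"
    using B(1) B'(1) set_drop_joint[OF z(1)] set_drop_joint[OF z(2)] tn by (intro pattern_inject) auto
  with tn show "zs = zs'" by (metis append_take_drop_id)
qed

lemma card_joint_le: "card joint \<le> (2*k) choose k"
proof (cases "joint = {}")
  case False
  then obtain z0 where z0: "z0 \<in> joint" by auto
  note B0 = jointD[OF z0]
  define U where "U = {0..<n+k} - (\<lambda>q. z0!q) ` {k..<n}"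
  have "card ((\<lambda>q. z0!q) ` {k..<n}) = n - k" using B0 by (subst card_image) (auto intro!: inj_on_nth)
  moreover have "(\<lambda>q. z0!q) ` {k..<n} \<subseteq> {0..<n+k}" using B0 by (auto simp flip: B0(3))
  ultimately have cU: "card U = 2 * k" unfolding U_def using k_le by (simp add: card_Diff_subset)
  have "set (take k zs) \<subseteq> U" "card (set (take k zs)) = k" if zs: "zs \<in> joint" for zs
  proof -
    note B = jointD[OF zs]
    show "card (set (take k zs)) = k" using B k_le by (simp add: distinct_card)
    show "set (take k zs) \<subseteq> U"
    proof
      fix x assume "x \<in> set (take k zs)"
      then obtain q where q: "q < k" "x = zs!q" using B k_le by (auto simp: in_set_conv_nth)
      have "x \<in> {0..<n+k}" using q B k_le by (metis le_add2 nth_mem order.strict_trans2 le_trans)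
      moreover have "x \<noteq> z0!q'" if q': "q' \<in> {k..<n}" for q'
        using joint_middle_nth_eq[OF z0 zs] q' q B k_le by (simp add: nth_eq_iff_index_eq)
      ultimately show "x \<in> U" unfolding U_def by blast
    qed
  qed
  then have "(\<lambda>zs. set (take k zs)) ` joint \<subseteq> {S. S \<subseteq> U \<and> card S = k}" by auto
  then have "card ((\<lambda>zs. set (take k zs)) ` joint) \<le> card U choose k"
    using card_mono[of "{S. S \<subseteq> U \<and> card S = k}"] by (simp add: U_def n_subsets)
  then show ?thesis using card_image[OF inj_on_set_take_joint] cU by simp
qed simp

end

lemma card_two_windows_le:
  assumes "k \<le> n"
  shows "card {zs \<in> perm_lists (n+k). pattern (take n zs) = \<tau> \<and> pattern (drop k zs) = \<tau>'} \<le> 4 ^ k"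
proof -
  interpret two_windows n k \<tau> \<tau>' using assms by unfold_locales
  have "card joint \<le> 2 ^ (2*k)" using card_joint_le binomial_le_pow2 le_trans by blast
  then show ?thesis by (simp add: joint_def power_mult)
qed

lemma card_overlapping_windows_large:
  assumes "k \<le> n"
  shows "card {zs \<in> perm_lists (n+k). pattern (take n zs) = \<tau> \<and> pattern (drop k zs) \<in> transp_ball n R \<sigma>}
     \<le> card (transp_ball n R \<sigma>) * 4 ^ k"
proof -
  have "{zs \<in> perm_lists (n+k). pattern (take n zs) = \<tau> \<and> pattern (drop k zs) \<in> transp_ball n R \<sigma>}
     = (\<Union>\<tau>'\<in>transp_ball n R \<sigma>. {zs \<in> perm_lists (n+k). pattern (take n zs) = \<tau> \<and> pattern (drop k zs) = \<tau>'})"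
    by auto
  then have "card {zs \<in> perm_lists (n+k). pattern (take n zs) = \<tau> \<and> pattern (drop k zs) \<in> transp_ball n R \<sigma>}
     \<le> (\<Sum>\<tau>'\<in>transp_ball n R \<sigma>. card {zs \<in> perm_lists (n+k). pattern (take n zs) = \<tau> \<and> pattern (drop k zs) = \<tau>'})"
    using card_UN_le[OF finite_transp_ball] by simp
  also have "\<dots> \<le> (\<Sum>\<tau>'\<in>transp_ball n R \<sigma>. 4 ^ k)" by (intro sum_mono card_two_windows_le assms)
  finally show ?thesis by simp
qed

section \<open>A random list covers a given permutation\<close>

lemma card_UN_lessThan_ge:
  fixes A :: "nat \<Rightarrow> 'a set"
  assumes "\<And>j. finite (A j)"
  shows "(\<Sum>j<m. real (card (A j))) - (\<Sum>j<m. \<Sum>i<j. real (card (A i \<inter> A j)))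
    \<le> real (card (\<Union>j<m. A j))"
proof (induction m)
  case (Suc m)
  let ?X = "\<Union>j<m. A j"
  have "card (?X \<union> A m) + card (?X \<inter> A m) = card ?X + card (A m)"
    using card_Un_Int[of ?X "A m"] assms by simp
  moreover have "card (?X \<inter> A m) \<le> (\<Sum>i<m. card (A i \<inter> A m))"
    using card_UN_le[of "{..<m}" "\<lambda>i. A i \<inter> A m"] by (simp add: Int_UN_distrib2)
  then have "real (card (?X \<inter> A m)) \<le> (\<Sum>i<m. real (card (A i \<inter> A m)))"
    by (metis of_nat_le_iff of_nat_sum)
  moreover have "(\<Union>j<Suc m. A j) = ?X \<union> A m" by (auto simp: lessThan_Suc)
  ultimately show ?case using Suc.IH by (simp add: lessThan_Suc)
qed simp

lemma fact_mult_power_le: "fact n * n ^ k \<le> (fact (n + k) :: nat)"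
proof (induction k)
  case (Suc k)
  have "fact n * n ^ Suc k = (fact n * n ^ k) * n" by simp
  also have "\<dots> \<le> fact (n + k) * (n + k + 1)" using Suc by (intro mult_le_mono) auto
  also have "\<dots> = fact (n + Suc k)" by (simp add: algebra_simps)
  finally show ?case .
qed simp

lemma order_invariant_window:
  "order_invariant (\<lambda>zs. P (pattern (take l (drop j zs))))"
  unfolding order_invariant_def
proof (intro allI impI)
  fix zs :: "nat list" and f :: "nat \<Rightarrow> nat"
  assume mono: "\<forall>x\<in>set zs. \<forall>y\<in>set zs. f x < f y \<longleftrightarrow> x < y"
  have "set (take l (drop j zs)) \<subseteq> set zs" by (meson in_set_dropD in_set_takeD subsetI)
  then have "pattern (map f (take l (drop j zs))) = pattern (take l (drop j zs))"
    using mono by (intro pattern_map_mono) auto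
  then show "P (pattern (take l (drop j (map f zs)))) = P (pattern (take l (drop j zs)))"
    by (simp add: take_map drop_map)
qed

lemma order_invariant_conj:
  "order_invariant C1 \<Longrightarrow> order_invariant C2 \<Longrightarrow> order_invariant (\<lambda>zs. C1 zs \<and> C2 zs)"
  by (simp add: order_invariant_def)

text \<open>The lists of length \<open>2n - 1\<close> play the role of a probability space: the \<open>n\<close> windows of
  a uniformly random such list each have a uniformly random pattern.\<close>

definition window_hits :: "nat \<Rightarrow> nat \<Rightarrow> (nat \<Rightarrow> nat) \<Rightarrow> nat \<Rightarrow> nat list set" where
  "window_hits n R \<sigma> j = {xs \<in> perm_lists (2*n-1). pattern (take n (drop j xs)) \<in> transp_ball n R \<sigma>}"

lemma finite_window_hits: "finite (window_hits n R \<sigma> j)"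
  by (simp add: window_hits_def)

lemma card_window_hits:
  assumes "j < n"
  shows "fact n * card (window_hits n R \<sigma> j) = fact (2*n-1) * card (transp_ball n R \<sigma> \<inter> perms n)"
proof -
  have "window_hits n R \<sigma> j
      = {xs \<in> perm_lists (2*n-1). pattern (take n (drop j xs)) \<in> transp_ball n R \<sigma> \<inter> perms n}"
    using pattern_window_perms[of j n "2*n-1"] assms by (auto simp: window_hits_def)
  moreover have "fact n * card {xs \<in> perm_lists (2*n-1). pattern (take n (drop j xs)) \<in> transp_ball n R \<sigma> \<inter> perms n}
      = fact (2*n-1) * card (transp_ball n R \<sigma> \<inter> perms n)"
    by (rule card_window_pattern_in) (use assms in auto)
  ultimately show ?thesis by simp
qed

lemma card_window_hits_inter:
  assumes "i + k < n"
  shows "fact (n+k) * card (window_hits n R \<sigma> i \<inter> window_hits n R \<sigma> (i+k))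
    = fact (2*n-1) * card {zs \<in> perm_lists (n+k).
        pattern (take n zs) \<in> transp_ball n R \<sigma> \<and> pattern (drop k zs) \<in> transp_ball n R \<sigma>}"
proof -
  let ?B = "transp_ball n R \<sigma>"
  let ?C = "\<lambda>zs. pattern (take n (drop 0 zs)) \<in> ?B \<and> pattern (take n (drop k zs)) \<in> ?B"
  have "window_hits n R \<sigma> i \<inter> window_hits n R \<sigma> (i+k)
      = {xs \<in> perm_lists (2*n-1). ?C (take (n+k) (drop i xs))}"
    by (auto simp: window_hits_def drop_take add.commute)
  moreover have "{zs \<in> perm_lists (n+k). ?C zs}
      = {zs \<in> perm_lists (n+k). pattern (take n zs) \<in> ?B \<and> pattern (drop k zs) \<in> ?B}"
    by (auto simp: length_perm_lists)
  moreover have "order_invariant ?C" by (intro order_invariant_conj order_invariant_window)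
  ultimately show ?thesis using card_window_satisfying[of i "n+k" "2*n-1" ?C] assms by simp
qed

lemma card_overlapping_windows_le_sum:
  "card {zs \<in> perm_lists (n+k). pattern (take n zs) \<in> transp_ball n R \<sigma> \<and> pattern (drop k zs) \<in> transp_ball n R \<sigma>}
    \<le> (\<Sum>\<tau>\<in>transp_ball n R \<sigma> \<inter> perms n. card {zs \<in> perm_lists (n+k).
          pattern (take n zs) = \<tau> \<and> pattern (drop k zs) \<in> transp_ball n R \<sigma>})"
  (is "card ?Z \<le> (\<Sum>\<tau>\<in>?B. card (?T \<tau>))")
proof -
  have "?Z \<subseteq> (\<Union>\<tau>\<in>?B. ?T \<tau>)" using pattern_window_perms[of 0 n "n+k"] by auto
  moreover have "finite (\<Union>\<tau>\<in>?B. ?T \<tau>)"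
    by (rule finite_subset[of _ "perm_lists (n+k)"]) auto
  ultimately have "card ?Z \<le> card (\<Union>\<tau>\<in>?B. ?T \<tau>)" by (rule card_mono[rotated])
  also have "\<dots> \<le> (\<Sum>\<tau>\<in>?B. card (?T \<tau>))" by (rule card_UN_le) (simp add: finite_transp_ball)
  finally show ?thesis .
qed

definition overlap_weight :: "nat \<Rightarrow> nat \<Rightarrow> nat \<Rightarrow> real" where
  "overlap_weight n R k = (if k \<le> 2*R+1 then 4 * real R * (real k + 1) / (real n + real k)
     else (real R + 1) * real n ^ (2*R) * 4 ^ k / real n ^ k)"

lemma card_window_hits_inter_bound:
  assumes "n \<ge> 1" "i < j" "j < n"
    and "\<And>\<tau>. \<tau> \<in> perms n \<Longrightarrow> fact n * card {zs \<in> perm_lists (n + (j-i)).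
           pattern (take n zs) = \<tau> \<and> pattern (drop (j-i) zs) \<in> transp_ball n R \<sigma>} \<le> W"
  shows "fact (n + (j-i)) * real (card (window_hits n R \<sigma> i \<inter> window_hits n R \<sigma> j))
    \<le> real (card (window_hits n R \<sigma> 0)) * W"
proof -
  define k where "k = j - i"
  let ?B = "transp_ball n R \<sigma> \<inter> perms n"
  let ?T = "\<lambda>\<tau>. card {zs \<in> perm_lists (n+k). pattern (take n zs) = \<tau> \<and> pattern (drop k zs) \<in> transp_ball n R \<sigma>}"
  have "fact n * (\<Sum>\<tau>\<in>?B. ?T \<tau>) \<le> card ?B * W"
    using sum_mono[of ?B "\<lambda>\<tau>. fact n * ?T \<tau>" "\<lambda>_. W"] assms(4) by (simp add: sum_distrib_left k_def)
  then have "fact n * card {zs \<in> perm_lists (n+k).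
      pattern (take n zs) \<in> transp_ball n R \<sigma> \<and> pattern (drop k zs) \<in> transp_ball n R \<sigma>} \<le> card ?B * W"
    using card_overlapping_windows_le_sum[of n k R \<sigma>] by (meson le_trans mult_le_mono2)
  then have "fact n * (fact (n+k) * card (window_hits n R \<sigma> i \<inter> window_hits n R \<sigma> j))
      \<le> fact (2*n-1) * (card ?B * W)"
    using card_window_hits_inter[of i k n R \<sigma>] assms(2,3) by (simp add: k_def ac_simps)
  also have "\<dots> = fact n * (card (window_hits n R \<sigma> 0) * W)"
    using card_window_hits[of 0 n R \<sigma>] assms(1) by (simp add: ac_simps)
  finally have "fact (n+k) * card (window_hits n R \<sigma> i \<inter> window_hits n R \<sigma> j)
      \<le> card (window_hits n R \<sigma> 0) * W" by simp
  then show ?thesis unfolding k_def by (metis of_nat_fact of_nat_le_iff of_nat_mult)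
qed

lemma fact_eq_mult_fact_pred: "n \<ge> 1 \<Longrightarrow> (fact n :: real) = real n * fact (n - 1)"
  by (metis Suc_diff_1 fact_Suc less_eq_Suc_le of_nat_Suc One_nat_def)

lemma card_window_hits_inter_le_small:
  assumes "n \<ge> 1" "R \<ge> 1" "i < j" "j < n"
  shows "real (card (window_hits n R \<sigma> i \<inter> window_hits n R \<sigma> j))
    \<le> real (card (window_hits n R \<sigma> 0)) * (4 * real R * (real (j-i) + 1) / (real n + real (j-i)))"
proof -
  define k where "k = j - i"
  define X where "X = real (card (window_hits n R \<sigma> i \<inter> window_hits n R \<sigma> j))"
  define H where "H = real (card (window_hits n R \<sigma> 0))"
  have "fact (n+k) * X \<le> H * real (4 * R * (k + 1) * fact (n+k-1))"
    unfolding X_def H_def k_def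
    by (rule card_window_hits_inter_bound[OF assms(1,3,4)],
        rule card_overlapping_windows_small[OF assms(1) _ assms(2)]) (use assms(3) in auto)
  then have "((real n + real k) * X) * fact (n+k-1) \<le> (H * (4 * real R * (real k + 1))) * fact (n+k-1)"
    using fact_eq_mult_fact_pred[of "n+k"] assms(1) by (simp add: ac_simps)
  then have "(real n + real k) * X \<le> H * (4 * real R * (real k + 1))" by simp
  then show ?thesis using assms(1) unfolding k_def[symmetric] X_def[symmetric] H_def[symmetric]
    by (simp add: field_simps)
qed

lemma card_window_hits_inter_le_large:
  assumes "n \<ge> 1" "i < j" "j < n"
  shows "real (card (window_hits n R \<sigma> i \<inter> window_hits n R \<sigma> j))
    \<le> real (card (window_hits n R \<sigma> 0)) * ((real R + 1) * real n ^ (2*R) * 4 ^ (j-i) / real n ^ (j-i))"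
proof -
  define k where "k = j - i"
  define X where "X = real (card (window_hits n R \<sigma> i \<inter> window_hits n R \<sigma> j))"
  define H where "H = real (card (window_hits n R \<sigma> 0))"
  define W where "W = (real R + 1) * real n ^ (2*R) * 4 ^ k"
  have "fact (n+k) * X \<le> H * real (fact n * (card (transp_ball n R \<sigma>) * 4 ^ k))"
    unfolding X_def H_def k_def
    by (rule card_window_hits_inter_bound[OF assms])
      (use card_overlapping_windows_large[of "j-i" n] assms in simp)
  also have "\<dots> \<le> H * (fact n * W)"
  proof -
    have "real (card (transp_ball n R \<sigma>)) \<le> real ((R + 1) * n ^ (2*R))"
      using card_transp_ball_le[OF assms(1), of R \<sigma>] by (simp only: of_nat_le_iff)
    then have "real (card (transp_ball n R \<sigma>)) \<le> (real R + 1) * real n ^ (2*R)"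
      by (simp add: distrib_right)
    then show ?thesis by (simp add: W_def H_def mult_left_mono mult_right_mono)
  qed
  finally have upper: "fact (n+k) * X \<le> H * (fact n * W)" .
  have "fact n * (real n ^ k * X) = fact n * real n ^ k * X" by (simp only: mult.assoc)
  also have "\<dots> \<le> fact (n+k) * X"
  proof (rule mult_right_mono)
    have "real (fact n * n ^ k) \<le> real (fact (n+k))"
      using fact_mult_power_le[of n k] by (simp only: of_nat_le_iff)
    then show "fact n * real n ^ k \<le> fact (n+k)" by simp
  qed (simp add: X_def)
  also have "\<dots> \<le> fact n * (H * W)" using upper by (simp only: mult.left_commute)
  finally have "real n ^ k * X \<le> H * W" by (simp add: mult_le_cancel_left_pos)
  then show ?thesis using assms(1) unfolding k_def[symmetric] X_def[symmetric] H_def[symmetric] W_def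
    by (simp add: field_simps)
qed

lemma card_window_hits_inter_le:
  assumes "n \<ge> 1" "R \<ge> 1" "i < j" "j < n"
  shows "real (card (window_hits n R \<sigma> i \<inter> window_hits n R \<sigma> j))
    \<le> real (card (window_hits n R \<sigma> 0)) * overlap_weight n R (j - i)"
  using card_window_hits_inter_le_small[OF assms] card_window_hits_inter_le_large[OF assms(1,3,4)]
  by (simp add: overlap_weight_def)

definition size_threshold :: "nat \<Rightarrow> nat" where
  "size_threshold R = 2 * ((2*R+1) * (4*R*(2*R+2)) + (R+1) * 4^(2*R+2)) + 4"

lemma overlap_weight_le:
  assumes "n \<ge> 4"
  shows "overlap_weight n R k \<le> (if k \<le> 2*R+1 then 4 * real R * (2 * real R + 2) / n else 0)
    + (real R + 1) * 4^(2*R+2) / (real n)^2"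
proof (cases "k \<le> 2*R+1")
  case True
  have "real k + 1 \<le> 2 * real R + 2" using True by linarith
  then have "4 * real R * (real k + 1) \<le> 4 * real R * (2 * real R + 2)" by (intro mult_left_mono) auto
  have "overlap_weight n R k = 4 * real R * (real k + 1) / (real n + real k)"
    using True by (simp add: overlap_weight_def)
  also have "\<dots> \<le> 4 * real R * (2 * real R + 2) / real n"
    by (rule frac_le) (use \<open>4 * real R * (real k + 1) \<le> _\<close> assms in auto)
  finally have "overlap_weight n R k \<le> 4 * real R * (2 * real R + 2) / real n" .
  moreover have "0 \<le> (real R + 1) * 4^(2*R+2) / (real n)^2" by simp
  ultimately show ?thesis by (subst if_P[OF True]) linarith
next
  case False
  then have "2*R+2 \<le> k" by simp
  then obtain e where e: "k = 2*R+2+e" using le_Suc_ex by blast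
  have n0: "real n > 0" using assms by simp
  have "(4::real)^e \<le> real n ^ e" using assms by (intro power_mono) auto
  then have "4^e / real n ^ e \<le> (1::real)" using n0 by (simp add: divide_le_eq_1)
  moreover have "(real R + 1) * real n ^ (2*R) * 4 ^ k / real n ^ k
      = (real R + 1) * 4^(2*R+2) / (real n)^2 * (4^e / real n ^ e)"
    unfolding e using n0 by (simp add: power_add field_simps power2_eq_square)
  ultimately have "overlap_weight n R k \<le> (real R + 1) * 4^(2*R+2) / (real n)^2"
    using False mult_left_mono[of "4^e / real n ^ e" 1 "(real R + 1) * 4^(2*R+2) / (real n)^2"]
    by (simp add: overlap_weight_def)
  then show ?thesis using False by simp
qed

lemma sum_overlap_weight_le:
  assumes "n \<ge> size_threshold R"
  shows "(\<Sum>k\<in>{1..<n}. overlap_weight n R k) \<le> 1/2"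
proof -
  define a where "a = 4 * real R * (2 * real R + 2)"
  define c where "c = (real R + 1) * 4^(2*R+2)"
  have n4: "n \<ge> 4" using assms by (simp add: size_threshold_def)
  have n0: "real n > 0" using n4 by simp
  have "(\<Sum>k\<in>{1..<n}. overlap_weight n R k)
      \<le> (\<Sum>k\<in>{1..<n}. (if k \<in> {..2*R+1} then a / n else 0) + c / (real n)^2)"
  proof (rule sum_mono)
    fix k show "overlap_weight n R k \<le> (if k \<in> {..2*R+1} then a / n else 0) + c / (real n)^2"
      using overlap_weight_le[OF n4, of R k] by (simp only: a_def c_def atMost_iff)
  qed
  also have "\<dots> = (\<Sum>k\<in>{1..<n} \<inter> {..2*R+1}. a / n) + (\<Sum>k\<in>{1..<n}. c / (real n)^2)"
    by (simp only: sum.distrib sum.inter_restrict[OF finite_atLeastLessThan])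
  also have "(\<Sum>k\<in>{1..<n} \<inter> {..2*R+1}. a / n) \<le> real (2*R+1) * (a / n)"
  proof -
    have "card ({1..<n} \<inter> {..2*R+1}) \<le> card {1..2*R+1}" by (intro card_mono) auto
    then have "real (card ({1..<n} \<inter> {..2*R+1})) \<le> real (2*R+1)" by (simp only: of_nat_le_iff) simp
    moreover have "a / n \<ge> 0" by (simp add: a_def)
    ultimately have "real (card ({1..<n} \<inter> {..2*R+1})) * (a / n) \<le> real (2*R+1) * (a / n)"
      by (rule mult_right_mono)
    then show ?thesis by (simp only: sum_constant)
  qed
  also have "(\<Sum>k\<in>{1..<n}. c / (real n)^2) \<le> n * (c / (real n)^2)"
  proof -
    have "(\<Sum>k\<in>{1..<n}. c / (real n)^2) = real (n - 1) * (c / (real n)^2)" by simp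
    also have "\<dots> \<le> n * (c / (real n)^2)" by (rule mult_right_mono) (simp_all add: c_def)
    finally show ?thesis .
  qed
  also have "n * (c / (real n)^2) = c / n" using n0 by (simp add: power2_eq_square)
  finally have "(\<Sum>k\<in>{1..<n}. overlap_weight n R k) \<le> (real (2*R+1) * a + c) / n"
    using n0 by (simp add: field_simps)
  also have "\<dots> \<le> 1/2"
  proof -
    have "real (2 * ((2*R+1) * (4*R*(2*R+2)) + (R+1) * 4^(2*R+2))) \<le> real n"
      using assms by (simp only: of_nat_le_iff) (simp add: size_threshold_def)
    then have "2 * (real (2*R+1) * a + c) \<le> real n" unfolding a_def c_def by (simp add: algebra_simps)
    then show ?thesis using n0 by (simp add: field_simps)
  qed
  finally show ?thesis .
qed

lemma card_UN_window_hits_ge: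
  assumes "R \<ge> 1" "n \<ge> size_threshold R"
  shows "real n * real (card (window_hits n R \<sigma> 0)) / 2 \<le> real (card (\<Union>j<n. window_hits n R \<sigma> j))"
proof -
  define H where "H = real (card (window_hits n R \<sigma> 0))"
  have n1: "n \<ge> 1" using assms by (simp add: size_threshold_def)
  have H: "H \<ge> 0" by (simp add: H_def)
  have single: "real (card (window_hits n R \<sigma> j)) = H" if "j < n" for j
  proof -
    have "card (window_hits n R \<sigma> j) = card (window_hits n R \<sigma> 0)"
      using card_window_hits[OF that, of R \<sigma>] card_window_hits[of 0 n R \<sigma>] n1
      by (metis fact_nonzero mult_left_cancel less_le_trans zero_less_one)
    then show ?thesis by (simp add: H_def)
  qed
  have pairs: "(\<Sum>i<j. real (card (window_hits n R \<sigma> i \<inter> window_hits n R \<sigma> j))) \<le> H / 2"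
    if j: "j < n" for j
  proof -
    have "(\<Sum>i<j. real (card (window_hits n R \<sigma> i \<inter> window_hits n R \<sigma> j)))
        \<le> (\<Sum>i<j. H * overlap_weight n R (j - i))"
      using card_window_hits_inter_le[OF n1 assms(1) _ j] by (intro sum_mono) (simp add: H_def)
    also have "\<dots> = H * (\<Sum>k\<in>{1..j}. overlap_weight n R k)"
    proof -
      have "(\<Sum>i<j. overlap_weight n R (j - i)) = (\<Sum>k\<in>{1..j}. overlap_weight n R k)"
        by (rule sum.reindex_bij_witness[of _ "\<lambda>k. j - k" "\<lambda>i. j - i"]) auto
      then show ?thesis by (simp add: sum_distrib_left[symmetric])
    qed
    also have "(\<Sum>k\<in>{1..j}. overlap_weight n R k) \<le> (\<Sum>k\<in>{1..<n}. overlap_weight n R k)"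
      using j by (intro sum_mono2) (auto simp: overlap_weight_def)
    also have "\<dots> \<le> 1/2" by (rule sum_overlap_weight_le[OF assms(2)])
    finally show ?thesis using H by (simp add: mult_left_mono)
  qed
  have "(\<Sum>j<n. real (card (window_hits n R \<sigma> j)))
      - (\<Sum>j<n. \<Sum>i<j. real (card (window_hits n R \<sigma> i \<inter> window_hits n R \<sigma> j)))
      \<le> real (card (\<Union>j<n. window_hits n R \<sigma> j))"
    by (rule card_UN_lessThan_ge) (rule finite_window_hits)
  moreover have "(\<Sum>j<n. real (card (window_hits n R \<sigma> j))) = n * H" using single by simp
  moreover have "(\<Sum>j<n. \<Sum>i<j. real (card (window_hits n R \<sigma> i \<inter> window_hits n R \<sigma> j))) \<le> n * (H / 2)"
    using sum_mono[of "{..<n}", OF pairs] by simp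
  ultimately show ?thesis by (simp add: H_def)
qed

section \<open>Greedy covering\<close>

definition covered :: "nat \<Rightarrow> nat \<Rightarrow> nat list \<Rightarrow> (nat \<Rightarrow> nat) set" where
  "covered n R xs = {\<sigma> \<in> perms n. \<exists>j<n. pattern (take n (drop j xs)) \<in> transp_ball n R \<sigma>}"

definition cover_fraction :: "nat \<Rightarrow> nat \<Rightarrow> real" where
  "cover_fraction n R = real n * real ((n div (2*R)) ^ (2*R)) / (2 * fact n)"

lemma card_lists_covering_ge:
  assumes "R \<ge> 1" "n \<ge> size_threshold R" "\<sigma> \<in> perms n"
  shows "cover_fraction n R * fact (2*n-1) \<le> real (card {xs \<in> perm_lists (2*n-1). \<sigma> \<in> covered n R xs})"
proof -
  define H where "H = real (card (window_hits n R \<sigma> 0))"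
  have n1: "n \<ge> 1" using assms(2) by (simp add: size_threshold_def)
  have "{xs \<in> perm_lists (2*n-1). \<sigma> \<in> covered n R xs} = (\<Union>j<n. window_hits n R \<sigma> j)"
    using assms(3) by (auto simp: covered_def window_hits_def)
  then have "real n * H / 2 \<le> real (card {xs \<in> perm_lists (2*n-1). \<sigma> \<in> covered n R xs})"
    using card_UN_window_hits_ge[OF assms(1,2)] by (simp add: H_def)
  moreover have "real ((n div (2*R)) ^ (2*R)) * fact (2*n-1) \<le> fact n * H"
  proof -
    have "(n div (2*R)) ^ (2*R) * fact (2*n-1) \<le> card (transp_ball n R \<sigma> \<inter> perms n) * fact (2*n-1)"
      using card_transp_ball_inter_perms_ge[OF assms(1,3)] by (rule mult_le_mono1)
    also have "\<dots> = fact n * card (window_hits n R \<sigma> 0)"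
      using card_window_hits[of 0 n R \<sigma>] n1 by (simp only: mult.commute)
    finally have "real ((n div (2*R)) ^ (2*R) * fact (2*n-1)) \<le> real (fact n * card (window_hits n R \<sigma> 0))"
      by (simp only: of_nat_le_iff)
    then show ?thesis by (simp only: of_nat_mult of_nat_fact H_def)
  qed
  then have "real n * (real ((n div (2*R)) ^ (2*R)) * fact (2*n-1)) / (2 * fact n)
      \<le> real n * (fact n * H) / (2 * fact n)"
    by (intro divide_right_mono mult_left_mono) simp_all
  then have "cover_fraction n R * fact (2*n-1) \<le> real n * H / 2"
    by (simp add: cover_fraction_def)
  ultimately show ?thesis by linarith
qed

lemma exists_ge_average:
  fixes f :: "'a \<Rightarrow> real"
  assumes "finite A" "A \<noteq> {}" "real (card A) * c \<le> (\<Sum>x\<in>A. f x)"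
  shows "\<exists>x\<in>A. c \<le> f x"
proof (rule ccontr)
  assume "\<not> (\<exists>x\<in>A. c \<le> f x)"
  then have "(\<Sum>x\<in>A. f x) < (\<Sum>x\<in>A. c)" using assms(1,2) by (intro sum_strict_mono) auto
  then show False using assms(3) by simp
qed

lemma exists_list_covering:
  assumes "R \<ge> 1" "n \<ge> size_threshold R" "U \<subseteq> perms n"
  shows "\<exists>xs\<in>perm_lists (2*n-1). cover_fraction n R * card U \<le> card (covered n R xs \<inter> U)"
proof -
  let ?P = "perm_lists (2*n-1)"
  have finU: "finite U" using assms(3) finite_perms by (rule finite_subset)
  have "(\<Sum>xs\<in>?P. real (card (covered n R xs \<inter> U))) = (\<Sum>xs\<in>?P. \<Sum>\<sigma>\<in>U. of_bool (\<sigma> \<in> covered n R xs))"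
    using finU by (intro sum.cong) (simp_all add: Int_commute Int_def)
  also have "\<dots> = (\<Sum>\<sigma>\<in>U. real (card {xs \<in> ?P. \<sigma> \<in> covered n R xs}))"
    by (subst sum.swap) (simp add: Int_def)
  also have "\<dots> \<ge> (\<Sum>\<sigma>\<in>U. cover_fraction n R * fact (2*n-1))"
    using card_lists_covering_ge[OF assms(1,2)] assms(3) by (intro sum_mono) auto
  finally have "real (card ?P) * (cover_fraction n R * real (card U)) \<le> (\<Sum>xs\<in>?P. real (card (covered n R xs \<inter> U)))"
    by (simp add: algebra_simps)
  moreover have "?P \<noteq> {}" using map_permutes_perm_lists[of id "2*n-1"] by auto
  ultimately show ?thesis using exists_ge_average[of ?P] by simp
qed

definition greedy_list :: "nat \<Rightarrow> nat \<Rightarrow> (nat \<Rightarrow> nat) set \<Rightarrow> nat list" where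
  "greedy_list n R U = (SOME xs. xs \<in> perm_lists (2*n-1) \<and>
     (\<forall>ys\<in>perm_lists (2*n-1). card (covered n R ys \<inter> U) \<le> card (covered n R xs \<inter> U)))"

lemma greedy_list:
  "greedy_list n R U \<in> perm_lists (2*n-1)"
  "ys \<in> perm_lists (2*n-1) \<Longrightarrow> card (covered n R ys \<inter> U) \<le> card (covered n R (greedy_list n R U) \<inter> U)"
proof -
  let ?P = "perm_lists (2*n-1)" and ?f = "\<lambda>xs. card (covered n R xs \<inter> U)"
  have "?P \<noteq> {}" using map_permutes_perm_lists[of id "2*n-1"] by auto
  then have "Max (?f ` ?P) \<in> ?f ` ?P" by simp
  then obtain xs where xs: "xs \<in> ?P" "Max (?f ` ?P) = ?f xs" by blast
  have "?f ys \<le> ?f xs" if "ys \<in> ?P" for ys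
  proof -
    have "?f ys \<le> Max (?f ` ?P)" using that by (intro Max_ge) auto
    then show ?thesis using xs(2) by simp
  qed
  then have "\<exists>xs. xs \<in> ?P \<and> (\<forall>ys\<in>?P. ?f ys \<le> ?f xs)" using xs(1) by blast
  then have "greedy_list n R U \<in> ?P \<and> (\<forall>ys\<in>?P. ?f ys \<le> ?f (greedy_list n R U))"
    unfolding greedy_list_def by (rule someI_ex)
  then show "greedy_list n R U \<in> ?P" "ys \<in> ?P \<Longrightarrow> ?f ys \<le> ?f (greedy_list n R U)" by auto
qed

primrec uncovered :: "nat \<Rightarrow> nat \<Rightarrow> nat \<Rightarrow> (nat \<Rightarrow> nat) set" where
  "uncovered n R 0 = perms n"
| "uncovered n R (Suc s) = uncovered n R s - covered n R (greedy_list n R (uncovered n R s))"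

lemma uncovered_subset: "uncovered n R s \<subseteq> perms n"
  by (induction s) auto

lemma cover_fraction_le_1:
  assumes "R \<ge> 1" "n \<ge> size_threshold R"
  shows "cover_fraction n R \<le> 1"
proof -
  have "id \<in> perms n" by (simp add: perms_def permutes_id)
  then have "cover_fraction n R * fact (2*n-1) \<le> real (card {xs \<in> perm_lists (2*n-1). id \<in> covered n R xs})"
    by (rule card_lists_covering_ge[OF assms])
  also have "\<dots> \<le> real (card (perm_lists (2*n-1)))" by (intro of_nat_mono card_mono) auto
  finally show ?thesis by simp
qed

lemma card_uncovered_le:
  assumes "R \<ge> 1" "n \<ge> size_threshold R"
  shows "real (card (uncovered n R s)) \<le> (1 - cover_fraction n R) ^ s * fact n"
proof (induction s)
  case 0 then show ?case by (simp add: card_perms)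
next
  case (Suc s)
  let ?U = "uncovered n R s" and ?C = "covered n R (greedy_list n R (uncovered n R s))"
  have finU: "finite ?U" using uncovered_subset finite_perms by (rule finite_subset)
  obtain xs where "xs \<in> perm_lists (2*n-1)" "cover_fraction n R * card ?U \<le> card (covered n R xs \<inter> ?U)"
    using exists_list_covering[OF assms uncovered_subset] by blast
  then have greedy: "cover_fraction n R * card ?U \<le> card (?C \<inter> ?U)"
    using greedy_list(2)[of xs n R ?U] by (meson of_nat_le_iff order_trans)
  have "card (?C \<inter> ?U) \<le> card ?U" using finU by (intro card_mono) auto
  then have "real (card (uncovered n R (Suc s))) = real (card ?U) - real (card (?C \<inter> ?U))"
    using finU by (simp add: card_Diff_subset_Int Int_commute of_nat_diff)
  also have "\<dots> \<le> (1 - cover_fraction n R) * real (card ?U)" using greedy by (simp add: algebra_simps)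
  also have "\<dots> \<le> (1 - cover_fraction n R) * ((1 - cover_fraction n R) ^ s * fact n)"
    using Suc cover_fraction_le_1[OF assms] by (intro mult_left_mono) auto
  finally show ?case by simp
qed

lemma covered_before_uncovered:
  assumes "\<sigma> \<in> perms n" "\<sigma> \<notin> uncovered n R K"
  shows "\<exists>s<K. \<sigma> \<in> covered n R (greedy_list n R (uncovered n R s))"
  using assms(2)
proof (induction K)
  case (Suc K)
  then show ?case by (cases "\<sigma> \<in> uncovered n R K") (auto intro: less_SucI)
qed (use assms(1) in simp)

section \<open>The covering sequence\<close>

lemma order_type_real_nth:
  assumes "\<And>q. q < n \<Longrightarrow> w q = real (ys ! q)" "length ys = n"
  shows "order_type n w = pattern ys"
proof
  fix p
  show "order_type n w p = pattern ys p"
  proof (cases "p < n")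
    case True
    then have "{k. k < n \<and> w k < w p} = {q. q < length ys \<and> ys!q < ys!p}" using assms by auto
    then show ?thesis using True assms(2) by (simp add: order_type_def pattern_def)
  qed (use assms in \<open>simp add: order_type_def pattern_def\<close>)
qed

lemma word_within_distance:
  assumes "\<And>q. q < n \<Longrightarrow> w q = real (ys ! q)" "length ys = n" "distinct ys"
    and "pattern ys \<in> transp_ball n R \<sigma>"
  shows "inj_on w {0..<n} \<and> perm_dist n \<sigma> (order_type n w) \<le> R"
proof
  show "inj_on w {0..<n}"
    using assms(1-3) by (auto simp: inj_on_def nth_eq_iff_index_eq)
  show "perm_dist n \<sigma> (order_type n w) \<le> R"
    using order_type_real_nth[OF assms(1,2)] perm_dist_le_if_transp_ball[OF assms(4)] by simp
qed

definition rounds_bound :: "nat \<Rightarrow> nat \<Rightarrow> real" where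
  "rounds_bound n R = (2*R+1) * ln (real n) / cover_fraction n R"

definition rounds :: "nat \<Rightarrow> nat \<Rightarrow> nat" where
  "rounds n R = nat \<lceil>rounds_bound n R\<rceil>"

definition leftover :: "nat \<Rightarrow> nat \<Rightarrow> (nat \<Rightarrow> nat) list" where
  "leftover n R = (SOME ps. set ps = uncovered n R (rounds n R) \<and> distinct ps)"

text \<open>The sequence is the concatenation of the greedy lists of the first \<open>rounds n R\<close> rounds,
  followed by the permutations left uncovered, each written out, and a final entry \<open>0\<close> that
  only makes the sequence nonempty. No window used below wraps around.\<close>

definition cover_length :: "nat \<Rightarrow> nat \<Rightarrow> nat" where
  "cover_length n R = rounds n R * (2*n-1) + length (leftover n R) * n + 1"

definition cover_seq :: "nat \<Rightarrow> nat \<Rightarrow> nat \<Rightarrow> real" where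
  "cover_seq n R t =
    (let K = rounds n R * (2*n-1) in
     if t < K then real (greedy_list n R (uncovered n R (t div (2*n-1))) ! (t mod (2*n-1)))
     else if t < K + length (leftover n R) * n
       then real ((leftover n R ! ((t - K) div n)) ((t - K) mod n))
     else 0)"

lemma leftover: "set (leftover n R) = uncovered n R (rounds n R)" "distinct (leftover n R)"
proof -
  have "finite (uncovered n R (rounds n R))" using uncovered_subset finite_perms by (rule finite_subset)
  then have "\<exists>ps. set ps = uncovered n R (rounds n R) \<and> distinct ps" by (rule finite_distinct_list)
  then have "set (leftover n R) = uncovered n R (rounds n R) \<and> distinct (leftover n R)"
    unfolding leftover_def by (rule someI_ex)
  then show "set (leftover n R) = uncovered n R (rounds n R)" "distinct (leftover n R)" by auto
qed

lemma cyc_word_cover_seq_round: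
  assumes "s < rounds n R" "j + q < 2*n-1"
  shows "s * (2*n-1) + j < cover_length n R"
    and "cyc_word (cover_length n R) (cover_seq n R) (s * (2*n-1) + j) q
      = real (greedy_list n R (uncovered n R s) ! (j + q))"
proof -
  have "s * (2*n-1) + (j + q) < (s + 1) * (2*n-1)" using assms(2) by simp
  also have "\<dots> \<le> rounds n R * (2*n-1)" using assms(1) by (intro mult_le_mono1) simp
  finally have lt: "s * (2*n-1) + (j + q) < rounds n R * (2*n-1)" .
  then show "s * (2*n-1) + j < cover_length n R" by (simp add: cover_length_def)
  have "(s * (2*n-1) + (j + q)) div (2*n-1) = s" "(s * (2*n-1) + (j + q)) mod (2*n-1) = j + q"
    using assms(2) by auto
  then show "cyc_word (cover_length n R) (cover_seq n R) (s * (2*n-1) + j) q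
      = real (greedy_list n R (uncovered n R s) ! (j + q))"
    using lt by (simp add: cyc_word_def cover_seq_def cover_length_def add.assoc)
qed

lemma cyc_word_cover_seq_leftover:
  assumes "a < length (leftover n R)" "q < n"
  shows "rounds n R * (2*n-1) + a * n < cover_length n R"
    and "cyc_word (cover_length n R) (cover_seq n R) (rounds n R * (2*n-1) + a * n) q
      = real ((leftover n R ! a) q)"
proof -
  have "a * n + q < (a + 1) * n" using assms(2) by simp
  also have "\<dots> \<le> length (leftover n R) * n" using assms(1) by (intro mult_le_mono1) simp
  finally have lt: "a * n + q < length (leftover n R) * n" .
  then show "rounds n R * (2*n-1) + a * n < cover_length n R" by (simp add: cover_length_def)
  have "(a * n + q) div n = a" "(a * n + q) mod n = q" using assms(2) by auto
  then show "cyc_word (cover_length n R) (cover_seq n R) (rounds n R * (2*n-1) + a * n) q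
      = real ((leftover n R ! a) q)"
    using lt by (simp add: cyc_word_def cover_seq_def cover_length_def add.assoc Let_def)
qed

lemma cover_seq_window_leftover:
  assumes "\<sigma> permutes {0..<n}" "\<sigma> \<in> uncovered n R (rounds n R)"
  shows "\<exists>i<cover_length n R. inj_on (cyc_word (cover_length n R) (cover_seq n R) i) {0..<n}
    \<and> perm_dist n \<sigma> (order_type n (cyc_word (cover_length n R) (cover_seq n R) i)) \<le> R"
proof -
  let ?w = "cyc_word (cover_length n R) (cover_seq n R)"
  obtain a where a: "a < length (leftover n R)" "leftover n R ! a = \<sigma>"
    using assms(2) leftover(1) by (metis in_set_conv_nth)
  let ?i = "rounds n R * (2*n-1) + a * n"
  have "?i < cover_length n R"
    using cyc_word_cover_seq_leftover(1)[OF a(1), of 0] cover_length_def by (cases "n = 0") auto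
  moreover have "inj_on (?w ?i) {0..<n} \<and> perm_dist n \<sigma> (order_type n (?w ?i)) \<le> R"
  proof (rule word_within_distance)
    show "?w ?i q = real (map \<sigma> [0..<n] ! q)" if "q < n" for q
      using cyc_word_cover_seq_leftover(2)[OF a(1) that] a(2) that by simp
    show "distinct (map \<sigma> [0..<n])" "pattern (map \<sigma> [0..<n]) \<in> transp_ball n R \<sigma>"
      using map_permutes_perm_lists[OF assms(1)] pattern_map_permutes[OF assms(1)] center_in_transp_ball
      by (auto simp: perm_lists_iff)
  qed simp
  ultimately show ?thesis by blast
qed

lemma cover_seq_window_round:
  assumes "s < rounds n R" "\<sigma> \<in> covered n R (greedy_list n R (uncovered n R s))"
  shows "\<exists>i<cover_length n R. inj_on (cyc_word (cover_length n R) (cover_seq n R) i) {0..<n}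
    \<and> perm_dist n \<sigma> (order_type n (cyc_word (cover_length n R) (cover_seq n R) i)) \<le> R"
proof -
  let ?w = "cyc_word (cover_length n R) (cover_seq n R)"
  let ?xs = "greedy_list n R (uncovered n R s)"
  obtain j where j: "j < n" "pattern (take n (drop j ?xs)) \<in> transp_ball n R \<sigma>"
    using assms(2) by (auto simp: covered_def)
  have xs: "?xs \<in> perm_lists (2*n-1)" by (rule greedy_list(1))
  let ?i = "s * (2*n-1) + j"
  have "?i < cover_length n R" using cyc_word_cover_seq_round(1)[OF assms(1), of j 0] j(1) by simp
  moreover have "inj_on (?w ?i) {0..<n} \<and> perm_dist n \<sigma> (order_type n (?w ?i)) \<le> R"
  proof (rule word_within_distance)
    show "?w ?i q = real (take n (drop j ?xs) ! q)" if "q < n" for q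
      using cyc_word_cover_seq_round(2)[OF assms(1), of j q] that j(1) length_perm_lists[OF xs] by simp
    show "length (take n (drop j ?xs)) = n" using j(1) length_perm_lists[OF xs] by simp
    show "distinct (take n (drop j ?xs))" using xs by (simp add: perm_lists_iff distinct_drop distinct_take)
  qed (rule j(2))
  ultimately show ?thesis by blast
qed

lemma R_covers_cover_seq: "R_covers R n (cover_length n R) (cover_seq n R)"
  unfolding R_covers_def
proof (intro allI impI)
  fix \<sigma> assume \<sigma>: "\<sigma> permutes {0..<n}"
  show "\<exists>i<cover_length n R. inj_on (cyc_word (cover_length n R) (cover_seq n R) i) {0..<n}
    \<and> perm_dist n \<sigma> (order_type n (cyc_word (cover_length n R) (cover_seq n R) i)) \<le> R"
  proof (cases "\<sigma> \<in> uncovered n R (rounds n R)")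
    case True
    then show ?thesis by (rule cover_seq_window_leftover[OF \<sigma>])
  next
    case False
    then show ?thesis
      using covered_before_uncovered[of \<sigma> n R "rounds n R"] \<sigma> cover_seq_window_round
      by (auto simp: perms_def)
  qed
qed

locale large_size =
  fixes n R :: nat
  assumes R_pos: "R \<ge> 1" and n_large: "n \<ge> size_threshold R"
begin

lemma n_ge: "n \<ge> 4 * R" "n \<ge> 3"
proof -
  have "4 * R \<le> (2*R+1) * (4*R*(2*R+2))" using R_pos by (simp add: algebra_simps)
  then show "n \<ge> 4 * R" using n_large by (simp add: size_threshold_def)
  show "n \<ge> 3" using n_large by (simp add: size_threshold_def)
qed

lemma ln_ge_1: "ln (real n) \<ge> 1"
proof -
  have "ln (exp 1) \<le> ln (3::real)" using exp_le by (subst ln_le_cancel_iff) auto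
  also have "\<dots> \<le> ln (real n)" using n_ge(2) by (subst ln_le_cancel_iff) auto
  finally show ?thesis by simp
qed

lemma ball_bound_ge: "real ((n div (2*R)) ^ (2*R)) \<ge> real n ^ (2*R) / (4*R) ^ (2*R)"
proof -
  define d where "d = 2 * R"
  have d0: "d > 0" using R_pos by (simp add: d_def)
  have "n < d * (n div d + 1)"
  proof -
    have "d * (n div d) + n mod d = n" by simp
    moreover have "n mod d < d" using d0 by simp
    moreover have "d * (n div d + 1) = d * (n div d) + d" by simp
    ultimately show ?thesis by linarith
  qed
  then have "real n < real d * (real (n div d) + 1)"
    by (metis of_nat_1 of_nat_add of_nat_less_iff of_nat_mult)
  then have "real n / real d - 1 < real (n div d)" using d0 by (simp add: field_simps)
  moreover have "real n / real d - 1 \<ge> real n / (2 * real d)"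
    using n_ge(1) d0 by (simp add: d_def field_simps)
  ultimately have "real n / (2 * real d) \<le> real (n div d)" by simp
  then have "(real n / (2 * real d)) ^ (2*R) \<le> real (n div d) ^ (2*R)" by (rule power_mono) simp
  then show ?thesis by (simp add: d_def power_divide)
qed

lemma ball_bound_le: "real ((n div (2*R)) ^ (2*R)) \<le> real n ^ (2*R)"
  by (simp add: power_mono)

lemma ball_bound_pos: "real ((n div (2*R)) ^ (2*R)) > 0"
proof -
  have "real n ^ (2*R) / (4*R) ^ (2*R) > 0" using n_ge R_pos by simp
  then show ?thesis using ball_bound_ge by linarith
qed

lemma cover_fraction_pos: "cover_fraction n R > 0"
  using ball_bound_pos n_ge by (simp add: cover_fraction_def)

lemma rounds_bound_ge: "rounds_bound n R \<ge> 1 / cover_fraction n R" "rounds_bound n R \<ge> 1"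
proof -
  have "(2 * real R + 1) * ln (real n) \<ge> 1 * 1"
    using ln_ge_1 by (intro mult_mono) auto
  then show "rounds_bound n R \<ge> 1 / cover_fraction n R"
    unfolding rounds_bound_def using cover_fraction_pos by (simp add: divide_right_mono)
  moreover have "1 / cover_fraction n R \<ge> 1"
    using cover_fraction_pos cover_fraction_le_1[OF R_pos n_large] by simp
  ultimately show "rounds_bound n R \<ge> 1" by simp
qed

lemma rounds_bounds: "real (rounds n R) \<ge> rounds_bound n R" "real (rounds n R) \<le> 2 * rounds_bound n R"
proof -
  have "real (rounds n R) = real_of_int \<lceil>rounds_bound n R\<rceil>"
    using rounds_bound_ge(2) by (simp add: rounds_def)
  then show "real (rounds n R) \<ge> rounds_bound n R" "real (rounds n R) \<le> 2 * rounds_bound n R"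
    using rounds_bound_ge(2) of_int_ceiling_le_add_one[of "rounds_bound n R"] by linarith+
qed

text \<open>After \<open>rounds n R\<close> rounds at most a fraction \<open>(1 - q)^K \<le> exp (-q K) \<le> n^-(2R+1)\<close> of
  the permutations is left, where \<open>q = cover_fraction n R\<close>.\<close>

lemma length_leftover_le: "real (length (leftover n R)) \<le> fact n / real n ^ (2*R+1)"
proof -
  let ?q = "cover_fraction n R" and ?K = "rounds n R"
  have "length (leftover n R) = card (uncovered n R ?K)" using leftover by (metis distinct_card)
  then have "real (length (leftover n R)) \<le> (1 - ?q) ^ ?K * fact n"
    using card_uncovered_le[OF R_pos n_large] by simp
  also have "(1 - ?q) ^ ?K \<le> exp (- ?q) ^ ?K"
    by (rule power_mono) (use cover_fraction_le_1[OF R_pos n_large] exp_ge_add_one_self[of "- ?q"] in auto)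
  also have "exp (- ?q) ^ ?K = exp (- (?q * real ?K))"
    by (simp add: exp_of_nat_mult[symmetric] algebra_simps)
  also have "\<dots> \<le> exp (- ((2*R+1) * ln (real n)))"
  proof -
    have "?q * rounds_bound n R \<le> ?q * real ?K"
      using rounds_bounds(1) cover_fraction_pos by (intro mult_left_mono) auto
    moreover have "?q * rounds_bound n R = (2*R+1) * ln (real n)"
      using cover_fraction_pos by (simp add: rounds_bound_def)
    ultimately show ?thesis by simp
  qed
  also have "\<dots> = 1 / real n ^ (2*R+1)"
  proof -
    have "exp ((2*R+1) * ln (real n)) = exp (ln (real n ^ (2*R+1)))"
      using n_ge(2) by (subst ln_realpow) (simp_all add: algebra_simps)
    also have "\<dots> = real n ^ (2*R+1)" using n_ge(2) by simp
    finally show ?thesis by (simp add: exp_minus')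
  qed
  finally show ?thesis by simp
qed

lemma cover_length_ge: "fact n / real n ^ (2*R) \<le> real (cover_length n R)"
proof -
  have n0: "real n > 0" using n_ge by simp
  have L: "real (2*n-1) = 2 * real n - 1" using n_ge by simp
  have "fact n / real n ^ (2*R) \<le> 2 * fact n * real (2*n-1) / (real n * real n ^ (2*R))"
    using n0 n_ge L by (simp add: field_simps)
  also have "\<dots> \<le> 2 * fact n * real (2*n-1) / (real n * real ((n div (2*R)) ^ (2*R)))"
    using ball_bound_le ball_bound_pos n0 L n_ge
    by (intro divide_left_mono mult_left_mono) simp_all
  also have "\<dots> = real (2*n-1) / cover_fraction n R"
    using ball_bound_pos n0 by (simp add: cover_fraction_def field_simps)
  also have "\<dots> = real (2*n-1) * (1 / cover_fraction n R)" by simp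
  also have "\<dots> \<le> real (2*n-1) * rounds_bound n R" using rounds_bound_ge(1) by (intro mult_left_mono) auto
  also have "\<dots> \<le> real (2*n-1) * real (rounds n R)" using rounds_bounds(1) by (intro mult_left_mono) auto
  also have "\<dots> \<le> real (cover_length n R)" by (simp add: cover_length_def)
  finally show ?thesis .
qed

lemma rounds_bound_mult_le:
  "rounds_bound n R * real n \<le> 2 * (2 * real R + 1) * (4 * real R) ^ (2*R) * (fact n * ln (real n) / real n ^ (2*R))"
proof -
  let ?b = "real ((n div (2*R)) ^ (2*R))"
  have n0: "real n > 0" using n_ge by simp
  have "1 / ?b \<le> (4 * real R) ^ (2*R) / real n ^ (2*R)"
    using ball_bound_ge ball_bound_pos n0 R_pos by (simp add: divide_simps mult.commute)
  moreover have "rounds_bound n R * real n = 2 * (2 * real R + 1) * (fact n * ln (real n)) * (1 / ?b)"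
    using n0 ball_bound_pos by (simp add: rounds_bound_def cover_fraction_def field_simps)
  moreover have "0 \<le> 2 * (2 * real R + 1) * (fact n * ln (real n))" using ln_ge_1 by simp
  ultimately have "rounds_bound n R * real n
      \<le> 2 * (2 * real R + 1) * (fact n * ln (real n)) * ((4 * real R) ^ (2*R) / real n ^ (2*R))"
    by (metis mult_left_mono)
  then show ?thesis by (simp add: field_simps)
qed

lemma cover_length_le:
  "real (cover_length n R) \<le> (10 * (2 * real R + 1) * (4 * real R) ^ (2*R) + 1)
     * (fact n * ln (real n) / real n ^ (2*R))"
proof -
  let ?A = "fact n * ln (real n) / real n ^ (2*R)" and ?x = "rounds_bound n R"
  have n0: "real n > 0" using n_ge by simp
  have "real (rounds n R) * real (2*n-1) \<le> (2 * ?x) * (2 * real n)"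
    using rounds_bounds rounds_bound_ge by (intro mult_mono) auto
  moreover have "real (length (leftover n R)) * real n \<le> fact n / real n ^ (2*R+1) * real n"
    using length_leftover_le n0 by (intro mult_right_mono) auto
  moreover have "fact n / real n ^ (2*R+1) * real n = fact n / real n ^ (2*R)"
    using n0 by (simp add: field_simps)
  moreover have "fact n / real n ^ (2*R) \<le> ?A"
    using ln_ge_1 by (simp add: divide_right_mono mult_le_cancel_left1)
  moreover have "1 * 1 \<le> ?x * real n"
    using rounds_bound_ge(2) n_ge by (intro mult_mono) auto
  moreover have "real (cover_length n R)
      = real (rounds n R) * real (2*n-1) + real (length (leftover n R)) * real n + 1"
    by (simp add: cover_length_def)
  ultimately have "real (cover_length n R) \<le> 5 * (?x * real n) + ?A" by linarith
  also have "\<dots> \<le> 5 * (2 * (2 * real R + 1) * (4 * real R) ^ (2*R) * ?A) + ?A"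
    using rounds_bound_mult_le by simp
  finally show ?thesis by (simp add: algebra_simps)
qed

end

theorem theorem4:
  fixes R :: nat
  assumes "R \<ge> 1"
  shows "\<exists>(M :: nat \<Rightarrow> nat) (S :: nat \<Rightarrow> nat \<Rightarrow> real).
           (\<forall>n. R_covers R n (M n) (S n)) \<and>
           (\<exists>c>0. \<forall>\<^sub>F n in sequentially. fact n / real n ^ (2*R) \<le> c * real (M n)) \<and>
           (\<exists>c>0. \<forall>\<^sub>F n in sequentially. real (M n) \<le> c * (fact n * ln (real n) / real n ^ (2*R)))"
proof -
  let ?c = "10 * (2 * real R + 1) * (4 * real R) ^ (2*R) + 1"
  have large: "\<forall>\<^sub>F n in sequentially. large_size n R"
    using assms by (auto simp: large_size_def eventually_sequentially)
  show ?thesis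
  proof (intro exI[of _ "\<lambda>n. cover_length n R"] exI[of _ "\<lambda>n. cover_seq n R"] conjI)
    show "\<forall>n. R_covers R n (cover_length n R) (cover_seq n R)" using R_covers_cover_seq by blast
    have "\<forall>\<^sub>F n in sequentially. fact n / real n ^ (2*R) \<le> 1 * real (cover_length n R)"
      using large by (rule eventually_mono) (simp add: large_size.cover_length_ge)
    then show "\<exists>c>0. \<forall>\<^sub>F n in sequentially. fact n / real n ^ (2*R) \<le> c * real (cover_length n R)"
      using zero_less_one by blast
    have "\<forall>\<^sub>F n in sequentially. real (cover_length n R) \<le> ?c * (fact n * ln (real n) / real n ^ (2*R))"
      using large by (rule eventually_mono) (rule large_size.cover_length_le)
    moreover have "?c > 0" by (intro add_nonneg_pos) auto
    ultimately show "\<exists>c>0. \<forall>\<^sub>F n in sequentially.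
        real (cover_length n R) \<le> c * (fact n * ln (real n) / real n ^ (2*R))" by blast
  qed
qed

end
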